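(* Let $n\in\mathbb{N}$, $0<\sigma_1^2<\sigma_2^2$, $\mathsf{R}>0$, and let $P_{\mathbf{X}^\star}$ be a probability distribution supported in $\mathcal{B}_0(\mathsf{R})=\{\mathbf{x}\in\mathbb{R}^n:\|\mathbf{x}\|\le\mathsf{R}\}$, with induced output densities $f_{\mathbf{Y}_1^\star},f_{\mathbf{Y}_2^\star}$. Define, for $\mathbf{x}\in\mathbb{R}^n$, \[ \Xi(\mathbf{x};P_{\mathbf{X}^\star})=\mathsf{D}(f_{\mathbf{Y}_1|\mathbf{X}}(\cdot| \mathbf{x}) \|f_{\mathbf{Y}_1^\star})- \mathsf{D}(f_{\mathbf{Y}_2|\mathbf{X}}(\cdot|\mathbf{x}) \|f_{\mathbf{Y}_2^\star}), \] and for $\mathbf{y}\in\mathbb{R}^n$, \[ g(\mathbf{y})=\mathbb{E}\left[\log\frac{f_{\mathbf{Y}_2^\star}(\mathbf{y}+\mathbf{N})}{f_{\mathbf{Y}_1^\star}(\mathbf{y})}\right]+ n \log\left(\frac{\sigma_2}{\sigma_1}\right), \] with $\mathbf{N}\sim\mathcal{N}(\mathbf{0}_n,(\sigma_2^2-\sigma_1^2)\mathbf{I}_n)$. Then $\Xi(\mathbf{x};P_{\mathbf{X}^\star})=\mathbb{E}[g(\mathbf{Y}_1)\mid\mathbf{X}=\mathbf{x}]$ for all $\mathbf{x}\in\mathbb{R}^n$, and $P_{\mathbf{X}^\star}$ attains $C_s(\sigma_1^2,\sigma_2^2,\mathsf{R},n)$ if and only if \[ \Xi(\mathbf{x};P_{\mathbf{X}^\star})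 = C_s(\sigma_1^2, \sigma_2^2,\mathsf{R},n) \text{ for } \mathbf{x} \in \mathrm{supp}(P_{\mathbf{X}^\star}),\qquad \Xi(\mathbf{x};P_{\mathbf{X}^\star}) \le C_s(\sigma_1^2, \sigma_2^2, \mathsf{R},n) \text{ for } \mathbf{x} \in \mathcal{B}_0(\mathsf{R}). \]
   Context: Vector Gaussian wiretap channel: $\mathbf{Y}_1=\mathbf{X}+\mathbf{N}_1$, $\mathbf{Y}_2=\mathbf{X}+\mathbf{N}_2$, $\mathbf{N}_1\sim\mathcal{N}(\mathbf{0}_n,\sigma_1^2\mathbf{I}_n)$, $\mathbf{N}_2\sim\mathcal{N}(\mathbf{0}_n,\sigma_2^2\mathbf{I}_n)$, mutually independent with $\mathbf{X}$; $f_{\mathbf{Y}_i|\mathbf{X}}(\cdot|\mathbf{x})$ is the $\mathcal{N}(\mathbf{x},\sigma_i^2\mathbf{I}_n)$ density and $\mathbb{E}[\cdot\mid\mathbf{X}=\mathbf{x}]$ is with respect to $\mathbf{Y}_1\sim\mathcal{N}(\mathbf{x},\sigma_1^2\mathbf{I}_n)$. $C_s(\sigma_1^2,\sigma_2^2,\mathsf{R},n)=\max I(\mathbf{X};\mathbf{Y}_1)-I(\mathbf{X};\mathbf{Y}_2)$ over distributions supported in $\mathcal{B}_0(\mathsf{R})$. $\mathsf{D}$ is relative entropy; $\mathrm{supp}$ is the support of a distribution. *)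

theory Defs
  imports "HOL-Probability.Probability"
begin

definition gauss_dens :: "real \<Rightarrow> 'a::euclidean_space \<Rightarrow> 'a \<Rightarrow> real" where
  "gauss_dens s x y = (2 * pi * s) powr (- real DIM('a) / 2) * exp (- (norm (y - x))\<^sup>2 / (2 * s))"

text \<open>Output density of Y = X + N, N ~ N(0, s I_n), X ~ P.\<close>
definition out_dens :: "real \<Rightarrow> 'a::euclidean_space measure \<Rightarrow> 'a \<Rightarrow> real" where
  "out_dens s P y = (\<integral>x. gauss_dens s x y \<partial>P)"

definition rel_ent :: "('a::euclidean_space \<Rightarrow> real) \<Rightarrow> ('a \<Rightarrow> real) \<Rightarrow> real" where
  "rel_ent f g = (\<integral>y. f y * ln (f y / g y) \<partial>lborel)"

definition mutual_info :: "real \<Rightarrow> 'a::euclidean_space measure \<Rightarrow> real" where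
  "mutual_info s P = (\<integral>x. rel_ent (gauss_dens s x) (out_dens s P) \<partial>P)"

definition input_dist :: "real \<Rightarrow> 'a::euclidean_space measure \<Rightarrow> bool" where
  "input_dist R P \<longleftrightarrow> prob_space P \<and> sets P = sets borel \<and> emeasure P (- cball 0 R) = 0"

definition secrecy_cap :: "real \<Rightarrow> real \<Rightarrow> real \<Rightarrow> 'a::euclidean_space itself \<Rightarrow> real" where
  "secrecy_cap s1 s2 R _ =
     Sup {mutual_info s1 P - mutual_info s2 (P :: 'a measure) | P. input_dist R P}"

definition supp :: "'a::metric_space measure \<Rightarrow> 'a set" where
  "supp P = {x. \<forall>e>0. emeasure P (ball x e) > 0}"

definition Xi :: "real \<Rightarrow> real \<Rightarrow> 'a::euclidean_space measure \<Rightarrow> 'a \<Rightarrow> real" where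
  "Xi s1 s2 P x = rel_ent (gauss_dens s1 x) (out_dens s1 P) - rel_ent (gauss_dens s2 x) (out_dens s2 P)"

definition gfun :: "real \<Rightarrow> real \<Rightarrow> 'a::euclidean_space measure \<Rightarrow> 'a \<Rightarrow> real" where
  "gfun s1 s2 P y = (\<integral>z. gauss_dens (s2 - s1) 0 z * ln (out_dens s2 P (y + z) / out_dens s1 P y) \<partial>lborel)
      + real DIM('a) * ln (sqrt s2 / sqrt s1)"

end

theory Submission
  imports Defs
begin

(* Write Y_s = X + N_s with N_s ~ N(0, s I_n), and f_s for the density of Y_s.  Up to constants,
   both relative entropies in Xi are Gaussian smoothings of - ln f_s:
   D(f_{Y_s|X=x} || f_s) = E[- ln f_s(Y_s) | X = x] - h(N_s), and ln f_s grows at most quadratically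
   because the input is bounded.  Hence everything is finite, Xi is continuous, and averaging over
   X ~ P gives F(P) = I_1(P) - I_2(P) = E_P[Xi], because I_s(P) = h(Y_s) - h(N_s).  The formula
   Xi(x) = E[g(Y_1) | X = x] is the semigroup property N(0, s_1) * N(0, s_2 - s_1) = N(0, s_2).

   For the optimality conditions, perturb P towards a point mass: P_t = (1 - t) P + t delta_x0.
   The output entropy under P_t is (1 - t) h(Y_s) + t E[- ln f_s(Y_s) | X = x0] minus the relative
   entropy of the new output density from f_s, which lies between 0 and
   t^2 chi^2(f_{Y_s|X=x0} || f_s).  Hence F(P_t) >= (1 - t) F(P) + t Xi(x0) - O(t^2), so optimality
   of P forces Xi <= C_s on the ball; then E_P[Xi] = F(P) = C_s forces Xi = C_s P-almost everywhere,
   hence on the support by continuity.  Conversely, Xi = C_s on the support gives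
   F(P) = E_P[Xi] = C_s. *)

section \<open>The Gaussian kernel\<close>

lemma norm_power2_eq_sum_Basis: "(norm (y::'a::euclidean_space))\<^sup>2 = (\<Sum>b\<in>Basis. (y \<bullet> b)\<^sup>2)"
  unfolding power2_norm_eq_inner by (subst euclidean_inner) (simp add: power2_eq_square)

lemma power2_norm_add_le: "(norm (x + y :: 'a::real_normed_vector))\<^sup>2 \<le> 2 * (norm x)\<^sup>2 + 2 * (norm y)\<^sup>2"
proof -
  have "(norm (x + y))\<^sup>2 \<le> (norm x + norm y)\<^sup>2"
    by (simp add: norm_triangle_ineq power_mono)
  also have "\<dots> \<le> 2 * (norm x)\<^sup>2 + 2 * (norm y)\<^sup>2"
    by (smt (verit) zero_le_power2 power2_sum sum_squares_bound)
  finally show ?thesis .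
qed

lemma power2_add_le_weighted:
  fixes a b e :: real
  assumes e: "0 < e"
  shows "(a + b)\<^sup>2 \<le> (1 + e) * a\<^sup>2 + (1 + 1 / e) * b\<^sup>2"
proof -
  have "(1 + e) * a\<^sup>2 + (1 + 1 / e) * b\<^sup>2 - (a + b)\<^sup>2 = (e * a - b)\<^sup>2 / e"
    using e by (simp add: field_simps power2_eq_square)
  moreover have "0 \<le> (e * a - b)\<^sup>2 / e"
    using e by simp
  ultimately show ?thesis by linarith
qed

lemma gauss_dens_nonneg [simp]: "0 \<le> gauss_dens s x y"
  by (simp add: gauss_dens_def)

lemma gauss_dens_pos: "0 < s \<Longrightarrow> 0 < gauss_dens s x y"
  by (simp add: gauss_dens_def)

lemma gauss_dens_measurable [measurable]:
  assumes [measurable]: "f \<in> borel_measurable M" "g \<in> borel_measurable M"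
  shows "(\<lambda>p. gauss_dens s (f p) (g p)) \<in> borel_measurable M"
  unfolding gauss_dens_def by measurable

lemma gauss_dens_shift: "gauss_dens s x y = gauss_dens s 0 (y - x)"
  by (simp add: gauss_dens_def)

lemma gauss_dens_eq_peak:
  "gauss_dens s (x::'a::euclidean_space) y = gauss_dens s (0::'a) 0 * exp (- (norm (y - x))\<^sup>2 / (2 * s))"
  by (simp add: gauss_dens_def)

lemma gauss_dens_le_peak: "0 < s \<Longrightarrow> gauss_dens s (x::'a::euclidean_space) y \<le> gauss_dens s (0::'a) 0"
  by (simp add: gauss_dens_def)

lemma ln_gauss_dens_peak:
  "0 < s \<Longrightarrow> ln (gauss_dens s (0::'a::euclidean_space) 0) = - real DIM('a) / 2 * ln (2 * pi * s)"
  by (simp add: gauss_dens_def)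

lemma ln_gauss_dens:
  "0 < s \<Longrightarrow> ln (gauss_dens s (x::'a::euclidean_space) y) = ln (gauss_dens s (0::'a) 0) - (norm (y - x))\<^sup>2 / (2 * s)"
  using gauss_dens_pos[of s "0::'a" 0] by (subst gauss_dens_eq_peak) (simp add: ln_mult)

lemma gauss_dens_eq_prod_normal_density:
  assumes "0 < s"
  shows "gauss_dens s 0 (y::'a::euclidean_space) = (\<Prod>b\<in>Basis. normal_density 0 (sqrt s) (y \<bullet> b))"
proof -
  have "(2 * pi * s) powr (- real DIM('a) / 2) = inverse (((2 * pi * s) powr (1/2)) powr real DIM('a))"
    by (simp add: powr_powr powr_minus)
  also have "\<dots> = (1 / sqrt (2 * pi * s)) ^ DIM('a)"
    using assms by (simp add: powr_half_sqrt powr_realpow power_one_over inverse_eq_divide)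
  finally have const: "(2 * pi * s) powr (- real DIM('a) / 2) = (1 / sqrt (2 * pi * s)) ^ DIM('a)" .
  have "(\<Prod>b\<in>Basis. normal_density 0 (sqrt s) (y \<bullet> b))
      = (\<Prod>b\<in>(Basis::'a set). 1 / sqrt (2 * pi * s) * exp (- (y \<bullet> b)\<^sup>2 / (2 * s)))"
    using assms by (simp add: normal_density_def)
  also have "\<dots> = (1 / sqrt (2 * pi * s)) ^ DIM('a) * exp (\<Sum>b\<in>(Basis::'a set). - (y \<bullet> b)\<^sup>2 / (2 * s))"
    by (simp only: prod.distrib prod_constant exp_sum[OF finite_Basis])
  also have "(\<Sum>b\<in>(Basis::'a set). - (y \<bullet> b)\<^sup>2 / (2 * s)) = - (norm y)\<^sup>2 / (2 * s)"
    by (simp add: norm_power2_eq_sum_Basis sum_divide_distrib sum_negf)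
  finally show ?thesis using const by (simp add: gauss_dens_def)
qed

lemma nn_integral_lborel_translate:
  fixes c :: "'a::euclidean_space"
  assumes [measurable]: "f \<in> borel_measurable borel"
  shows "(\<integral>\<^sup>+y. f (c + y) \<partial>lborel) = (\<integral>\<^sup>+y. f y \<partial>lborel)"
  by (subst (2) lborel_distr_plus[symmetric, of c]) (simp add: nn_integral_distr)

lemma integral_lborel_translate:
  fixes c :: "'a::euclidean_space" and f :: "'a \<Rightarrow> real"
  assumes [measurable]: "f \<in> borel_measurable borel"
  shows "(\<integral>y. f (c + y) \<partial>lborel) = (\<integral>y. f y \<partial>lborel)"
  by (subst (2) lborel_distr_plus[symmetric, of c]) (simp add: integral_distr)

lemma integrable_lborel_translate_iff:
  fixes c :: "'a::euclidean_space" and f :: "'a \<Rightarrow> real"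
  assumes [measurable]: "f \<in> borel_measurable borel"
  shows "integrable lborel (\<lambda>y. f (c + y)) \<longleftrightarrow> integrable lborel f"
  by (subst (2) lborel_distr_plus[symmetric, of c]) (simp add: integrable_distr_eq)

lemma nn_integral_gauss_dens_origin:
  assumes s: "0 < s"
  shows "(\<integral>\<^sup>+y. gauss_dens s 0 (y::'a::euclidean_space) \<partial>lborel) = 1"
proof -
  have "(\<integral>\<^sup>+y. gauss_dens s 0 (y::'a) \<partial>lborel)
     = (\<integral>\<^sup>+y. (\<Prod>b\<in>Basis. ennreal (normal_density 0 (sqrt s) ((y::'a) \<bullet> b))) \<partial>lborel)"
    by (simp add: gauss_dens_eq_prod_normal_density[OF s] prod_ennreal)
  also have "\<dots> = (\<Prod>b\<in>(Basis::'a set). (\<integral>\<^sup>+t. normal_density 0 (sqrt s) t \<partial>lborel))"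
    by (rule nn_integral_lborel_prod) auto
  also have "\<dots> = 1"
    using s by (subst nn_integral_eq_integral) auto
  finally show ?thesis .
qed

lemma nn_integral_gauss_dens_origin_second_moment:
  assumes s: "0 < s"
  shows "(\<integral>\<^sup>+y. gauss_dens s 0 (y::'a::euclidean_space) * (norm y)\<^sup>2 \<partial>lborel) = real DIM('a) * s"
proof -
  have moment1: "(\<integral>\<^sup>+t. normal_density 0 (sqrt s) t \<partial>lborel) = 1"
    using s by (subst nn_integral_eq_integral) auto
  have "has_bochner_integral lborel (\<lambda>t. normal_density 0 (sqrt s) t * t\<^sup>2) s"
    using normal_moment_even[where k=1 and \<mu>=0 and \<sigma>="sqrt s"] s by (simp add: numeral_2_eq_2)
  then have moment2: "(\<integral>\<^sup>+t. normal_density 0 (sqrt s) t * t\<^sup>2 \<partial>lborel) = s"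
    by (subst nn_integral_eq_integral)
       (auto intro: integrable.intros dest: has_bochner_integral_integral_eq)
  have "(\<integral>\<^sup>+y. gauss_dens s 0 (y::'a) * (norm y)\<^sup>2 \<partial>lborel)
     = (\<integral>\<^sup>+y. (\<Sum>b\<in>Basis. ennreal (gauss_dens s 0 (y::'a) * (y \<bullet> b)\<^sup>2)) \<partial>lborel)"
    by (simp add: norm_power2_eq_sum_Basis sum_distrib_left)
  also have "\<dots> = (\<Sum>b\<in>(Basis::'a set). (\<integral>\<^sup>+y. gauss_dens s 0 y * (y \<bullet> b)\<^sup>2 \<partial>lborel))"
    by (rule nn_integral_sum) auto
  also have "\<dots> = (\<Sum>b\<in>(Basis::'a set). ennreal s)"
  proof (rule sum.cong[OF refl])
    fix b :: 'a assume b: "b \<in> Basis"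
    have "(\<integral>\<^sup>+y. gauss_dens s 0 y * (y \<bullet> b)\<^sup>2 \<partial>lborel)
      = (\<integral>\<^sup>+y. (\<Prod>b'\<in>(Basis::'a set). ennreal (normal_density 0 (sqrt s) (y \<bullet> b')
                                                 * (if b' = b then (y \<bullet> b')\<^sup>2 else 1))) \<partial>lborel)"
      using b by (simp add: gauss_dens_eq_prod_normal_density[OF s] prod_ennreal prod.distrib)
    also have "\<dots> = (\<Prod>b'\<in>(Basis::'a set).
        (\<integral>\<^sup>+t. normal_density 0 (sqrt s) t * (if b' = b then t\<^sup>2 else 1) \<partial>lborel))"
      by (rule nn_integral_lborel_prod) auto
    also have "\<dots> = (\<Prod>b'\<in>(Basis::'a set). (if b' = b then ennreal s else 1))"
      by (rule prod.cong[OF refl]) (simp add: moment1 moment2)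
    finally show "(\<integral>\<^sup>+y. gauss_dens s 0 y * (y \<bullet> b)\<^sup>2 \<partial>lborel) = ennreal s"
      using b by simp
  qed
  also have "\<dots> = real DIM('a) * s"
    using s by (simp add: ennreal_mult' ennreal_of_nat_eq_real_of_nat)
  finally show ?thesis .
qed

lemma has_bochner_integral_gauss_dens:
  assumes s: "0 < s"
  shows "has_bochner_integral lborel (gauss_dens s (x::'a::euclidean_space)) 1"
proof (rule has_bochner_integral_nn_integral)
  have "(\<integral>\<^sup>+y. gauss_dens s x y \<partial>lborel) = (\<integral>\<^sup>+y. gauss_dens s x (x + y) \<partial>lborel)"
    by (rule nn_integral_lborel_translate[symmetric]) measurable
  also have "\<dots> = 1"
    by (simp add: gauss_dens_shift[of s x] nn_integral_gauss_dens_origin[OF s])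
  finally show "(\<integral>\<^sup>+y. gauss_dens s x y \<partial>lborel) = ennreal 1" by simp
qed auto

lemma has_bochner_integral_gauss_dens_second_moment:
  assumes s: "0 < s"
  shows "has_bochner_integral lborel (\<lambda>y. gauss_dens s (x::'a::euclidean_space) y * (norm (y - x))\<^sup>2)
           (real DIM('a) * s)"
proof (rule has_bochner_integral_nn_integral)
  have "(\<integral>\<^sup>+y. gauss_dens s x y * (norm (y - x))\<^sup>2 \<partial>lborel)
     = (\<integral>\<^sup>+y. gauss_dens s x (x + y) * (norm ((x + y) - x))\<^sup>2 \<partial>lborel)"
    by (rule nn_integral_lborel_translate[symmetric]) measurable
  also have "\<dots> = real DIM('a) * s"
    by (simp add: gauss_dens_shift[of s x] nn_integral_gauss_dens_origin_second_moment[OF s])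
  finally show "(\<integral>\<^sup>+y. gauss_dens s x y * (norm (y - x))\<^sup>2 \<partial>lborel) = ennreal (real DIM('a) * s)" .
qed (use s in auto)

lemma integrable_gauss_dens [simp]: "0 < s \<Longrightarrow> integrable lborel (gauss_dens s x)"
  using has_bochner_integral_gauss_dens integrable.intros by blast

lemma integral_gauss_dens [simp]: "0 < s \<Longrightarrow> (\<integral>y. gauss_dens s x y \<partial>lborel) = 1"
  using has_bochner_integral_gauss_dens has_bochner_integral_integral_eq by blast

lemma integrable_gauss_dens_second_moment:
  "0 < s \<Longrightarrow> integrable lborel (\<lambda>y. gauss_dens s x y * (norm (y - x))\<^sup>2)"
  using has_bochner_integral_gauss_dens_second_moment integrable.intros by blast

lemma integral_gauss_dens_second_moment:
  "0 < s \<Longrightarrow> (\<integral>y. gauss_dens s x y * (norm (y - x))\<^sup>2 \<partial>lborel) = real DIM('a) * s"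
  for x :: "'a::euclidean_space"
  using has_bochner_integral_gauss_dens_second_moment has_bochner_integral_integral_eq by blast

lemma
  assumes s: "0 < s"
  shows integrable_gauss_dens_norm_power2:
      "integrable lborel (\<lambda>y. gauss_dens s (x::'a::euclidean_space) y * (norm y)\<^sup>2)"
    and integral_gauss_dens_norm_power2_le:
      "(\<integral>y. gauss_dens s x y * (norm y)\<^sup>2 \<partial>lborel) \<le> 2 * real DIM('a) * s + 2 * (norm x)\<^sup>2"
proof -
  define bound where "bound y = 2 * (gauss_dens s x y * (norm (y - x))\<^sup>2) + 2 * (norm x)\<^sup>2 * gauss_dens s x y" for y
  have int_bound: "integrable lborel bound"
    unfolding bound_def using integrable_gauss_dens_second_moment[OF s, of x] s by auto
  have le: "gauss_dens s x y * (norm y)\<^sup>2 \<le> bound y" for y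
    using mult_left_mono[OF power2_norm_add_le[of "y - x" x], of "gauss_dens s x y"]
    by (simp add: bound_def algebra_simps)
  show int: "integrable lborel (\<lambda>y. gauss_dens s x y * (norm y)\<^sup>2)"
    by (rule Bochner_Integration.integrable_bound[OF int_bound]) (auto intro: order_trans[OF le abs_ge_self])
  have "(\<integral>y. gauss_dens s x y * (norm y)\<^sup>2 \<partial>lborel) \<le> (\<integral>y. bound y \<partial>lborel)"
    by (rule integral_mono[OF int int_bound le])
  also have "\<dots> = 2 * real DIM('a) * s + 2 * (norm x)\<^sup>2"
    using integrable_gauss_dens_second_moment[OF s, of x] s by (simp add: bound_def integral_gauss_dens_second_moment)
  finally show "(\<integral>y. gauss_dens s x y * (norm y)\<^sup>2 \<partial>lborel) \<le> 2 * real DIM('a) * s + 2 * (norm x)\<^sup>2" .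
qed

lemma gauss_exponent_split:
  fixes x y w :: "'a::real_inner"
  assumes t: "0 < t" and d: "0 < d"
  defines "m \<equiv> (d / (t + d)) *\<^sub>R x + (t / (t + d)) *\<^sub>R w"
  shows "(norm (y - x))\<^sup>2 / t + (norm (w - y))\<^sup>2 / d
       = (norm (w - x))\<^sup>2 / (t + d) + (norm (y - m))\<^sup>2 / (t * d / (t + d))"
proof -
  define a b s where "a = y - x" and "b = w - y" and "s = t + d"
  have s: "0 < s" using t d by (simp add: s_def)
  have "s *\<^sub>R m = d *\<^sub>R x + t *\<^sub>R w"
    using s by (simp add: m_def s_def[symmetric] scaleR_add_right)
  then have "s *\<^sub>R (y - m) = d *\<^sub>R a - t *\<^sub>R b"
    by (simp add: a_def b_def s_def algebra_simps)
  then have "s\<^sup>2 * (norm (y - m))\<^sup>2 = (norm (d *\<^sub>R a - t *\<^sub>R b))\<^sup>2"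
    using s by (metis norm_scaleR power_mult_distrib abs_of_pos)
  also have "\<dots> = d * s * (norm a)\<^sup>2 + t * s * (norm b)\<^sup>2 - t * d * (norm (a + b))\<^sup>2"
    by (simp add: s_def power2_norm_eq_inner inner_commute[of b a] algebra_simps)
  finally have "(norm (y - x))\<^sup>2 / t + (norm (w - y))\<^sup>2 / d
      = (norm (w - x))\<^sup>2 / s + (norm (y - m))\<^sup>2 / (t * d / s)"
    using s t d by (simp add: a_def b_def field_simps power2_eq_square)
  then show ?thesis by (simp add: s_def)
qed

lemma gauss_dens_mult_gauss_dens:
  fixes x y w :: "'a::euclidean_space"
  assumes t: "0 < t" and d: "0 < d"
  shows "gauss_dens t x y * gauss_dens d y w
       = gauss_dens (t + d) x w * gauss_dens (t * d / (t + d)) ((d / (t + d)) *\<^sub>R x + (t / (t + d)) *\<^sub>R w) y"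
proof -
  have "(2 * pi * t) powr e * (2 * pi * d) powr e = ((2 * pi * t) * (2 * pi * d)) powr e" for e
    by (rule powr_mult[symmetric])
  also have "(2 * pi * t) * (2 * pi * d) = (2 * pi * (t + d)) * (2 * pi * (t * d / (t + d)))"
    using t d by (simp add: field_simps)
  also have "((2 * pi * (t + d)) * (2 * pi * (t * d / (t + d)))) powr e
      = (2 * pi * (t + d)) powr e * (2 * pi * (t * d / (t + d))) powr e" for e
    by (rule powr_mult)
  finally have const: "(2 * pi * t) powr e * (2 * pi * d) powr e
      = (2 * pi * (t + d)) powr e * (2 * pi * (t * d / (t + d))) powr e" for e .
  have exp: "exp (- (norm (y - x))\<^sup>2 / (2 * t)) * exp (- (norm (w - y))\<^sup>2 / (2 * d))
      = exp (- (norm (w - x))\<^sup>2 / (2 * (t + d)))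
        * exp (- (norm (y - ((d / (t + d)) *\<^sub>R x + (t / (t + d)) *\<^sub>R w)))\<^sup>2 / (2 * (t * d / (t + d))))"
  proof -
    have half: "- u / (2 * v) = - (u / v) / 2" for u v :: real
      by simp
    show ?thesis
      by (simp only: mult_exp_exp half add_divide_distrib[symmetric] minus_add_distrib[symmetric]
          gauss_exponent_split[OF t d])
  qed
  show ?thesis
    unfolding gauss_dens_def
    using const[of "- real DIM('a) / 2"] exp by (simp add: ac_simps)
qed

lemma integral_gauss_dens_conv:
  fixes x w :: "'a::euclidean_space"
  assumes t: "0 < t" and d: "0 < d"
  shows "(\<integral>y. gauss_dens t x y * gauss_dens d y w \<partial>lborel) = gauss_dens (t + d) x w"
  using t d by (simp add: gauss_dens_mult_gauss_dens)

section \<open>Gaussian smoothing\<close>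

definition gauss_smooth :: "real \<Rightarrow> ('a::euclidean_space \<Rightarrow> real) \<Rightarrow> 'a \<Rightarrow> real" where
  "gauss_smooth s h x = (\<integral>y. gauss_dens s x y * h y \<partial>lborel)"

lemma gauss_smooth_measurable [measurable]:
  assumes [measurable]: "h \<in> borel_measurable borel"
  shows "gauss_smooth s h \<in> borel_measurable (borel :: 'a::euclidean_space measure)"
proof -
  have "(\<lambda>p::'a \<times> 'a. gauss_dens s (fst p) (snd p) * h (snd p)) \<in> borel_measurable (borel \<Otimes>\<^sub>M lborel)"
    by measurable
  then show ?thesis
    unfolding gauss_smooth_def[abs_def]
    by (intro lborel.borel_measurable_lebesgue_integral) (simp add: case_prod_beta)
qed

lemma
  fixes h :: "'a::euclidean_space \<Rightarrow> real"
  assumes s: "0 < s" and [measurable]: "h \<in> borel_measurable borel"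
    and h_le: "\<And>y. \<bar>h y\<bar> \<le> a + b * (norm y)\<^sup>2" and b: "0 \<le> b"
  shows integrable_gauss_dens_mult: "integrable lborel (\<lambda>y. gauss_dens s x y * h y)"
    and abs_gauss_smooth_le: "\<bar>gauss_smooth s h x\<bar> \<le> (a + 2 * b * real DIM('a) * s) + 2 * b * (norm x)\<^sup>2"
proof -
  define bound where "bound y = a * gauss_dens s x y + b * (gauss_dens s x y * (norm y)\<^sup>2)" for y
  have int_bound: "integrable lborel bound"
    unfolding bound_def using integrable_gauss_dens_norm_power2[OF s, of x] s by auto
  have le: "\<bar>gauss_dens s x y * h y\<bar> \<le> bound y" for y
    using mult_left_mono[OF h_le, of "gauss_dens s x y" y] by (simp add: abs_mult bound_def algebra_simps)
  show int: "integrable lborel (\<lambda>y. gauss_dens s x y * h y)"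
    by (rule Bochner_Integration.integrable_bound[OF int_bound]) (auto intro: order_trans[OF le abs_ge_self])
  have "\<bar>gauss_smooth s h x\<bar> \<le> (\<integral>y. bound y \<partial>lborel)"
    unfolding gauss_smooth_def by (rule integral_abs_bound_integral[OF int int_bound le])
  also have "\<dots> = a + b * (\<integral>y. gauss_dens s x y * (norm y)\<^sup>2 \<partial>lborel)"
    unfolding bound_def using integrable_gauss_dens_norm_power2[OF s, of x] s by simp
  also have "\<dots> \<le> a + b * (2 * real DIM('a) * s + 2 * (norm x)\<^sup>2)"
    using integral_gauss_dens_norm_power2_le[OF s, of x] b by (simp add: mult_left_mono)
  finally show "\<bar>gauss_smooth s h x\<bar> \<le> (a + 2 * b * real DIM('a) * s) + 2 * b * (norm x)\<^sup>2"
    by (simp add: algebra_simps)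
qed

lemma measurable_sets_borel: "sets M = sets borel \<Longrightarrow> f \<in> borel_measurable borel \<Longrightarrow> f \<in> borel_measurable M"
  using measurable_cong_sets[of M borel borel borel] by simp

lemma
  fixes M :: "'a::euclidean_space measure" and h :: "'a \<Rightarrow> real"
  assumes "finite_measure M" and sets_M: "sets M = sets borel" and s: "0 < s"
    and [measurable]: "h \<in> borel_measurable borel"
    and h_le: "\<And>y. \<bar>h y\<bar> \<le> a + b * (norm y)\<^sup>2" and b: "0 \<le> b"
    and int_M: "integrable M (\<lambda>x. (norm x)\<^sup>2)"
  shows integrable_gauss_convolution_mult: "integrable lborel (\<lambda>y. (\<integral>x. gauss_dens s x y \<partial>M) * h y)"
    and integral_gauss_smooth: "(\<integral>x. gauss_smooth s h x \<partial>M) = (\<integral>y. (\<integral>x. gauss_dens s x y \<partial>M) * h y \<partial>lborel)"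
proof -
  interpret finite_measure M by fact
  interpret pair_sigma_finite M lborel ..
  define k where "k = (\<lambda>(x, y). gauss_dens s x y * h y)"
  have sets_pair: "sets (M \<Otimes>\<^sub>M lborel) = sets (borel \<Otimes>\<^sub>M (borel :: 'a measure))"
    using sets_M by (intro sets_pair_measure_cong) auto
  have "k \<in> borel_measurable (borel \<Otimes>\<^sub>M borel)"
    unfolding k_def by measurable
  then have k_meas: "k \<in> borel_measurable (M \<Otimes>\<^sub>M lborel)"
    by (subst measurable_cong_sets[OF sets_pair refl])
  have abs_h_le: "\<And>y. \<bar>\<bar>h y\<bar>\<bar> \<le> a + b * (norm y)\<^sup>2"
    using h_le by simp
  have "integrable M (\<lambda>x. gauss_smooth s (\<lambda>y. \<bar>h y\<bar>) x)"
  proof (rule Bochner_Integration.integrable_bound)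
    show "integrable M (\<lambda>x. (a + 2 * b * real DIM('a) * s) + 2 * b * (norm x)\<^sup>2)"
      using int_M by auto
    show "gauss_smooth s (\<lambda>y. \<bar>h y\<bar>) \<in> borel_measurable M"
      by (rule measurable_sets_borel[OF sets_M]) measurable
    show "AE x in M. norm (gauss_smooth s (\<lambda>y. \<bar>h y\<bar>) x)
        \<le> norm ((a + 2 * b * real DIM('a) * s) + 2 * b * (norm x)\<^sup>2)"
      by (rule AE_I2) (use abs_gauss_smooth_le[OF s _ abs_h_le b] h_le[of 0] b s in auto)
  qed
  then have "integrable (M \<Otimes>\<^sub>M lborel) k"
    using integrable_gauss_dens_mult[OF s _ h_le b] unfolding k_def
    by (intro Fubini_integrable[OF k_meas[unfolded k_def]]) (auto simp: gauss_smooth_def abs_mult)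
  then have "integrable (M \<Otimes>\<^sub>M lborel) (case_prod (\<lambda>x y. gauss_dens s x y * h y))"
    by (simp add: k_def)
  from integrable_snd[OF this] Fubini_integral[OF this]
  show "integrable lborel (\<lambda>y. (\<integral>x. gauss_dens s x y \<partial>M) * h y)"
    and "(\<integral>x. gauss_smooth s h x \<partial>M) = (\<integral>y. (\<integral>x. gauss_dens s x y \<partial>M) * h y \<partial>lborel)"
    by (simp_all add: gauss_smooth_def)
qed

lemma gauss_smooth_gauss_smooth:
  fixes h :: "'a::euclidean_space \<Rightarrow> real"
  assumes t: "0 < t" and d: "0 < d" and [measurable]: "h \<in> borel_measurable borel"
    and h_le: "\<And>y. \<bar>h y\<bar> \<le> a + b * (norm y)\<^sup>2" and b: "0 \<le> b"
  shows "gauss_smooth t (gauss_smooth d h) x = gauss_smooth (t + d) h x"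
proof -
  define D where "D = density lborel (gauss_dens t x)"
  have "finite_measure D"
    unfolding D_def using t by (intro finite_measureI) (simp add: emeasure_density nn_integral_eq_integral)
  moreover have "integrable D (\<lambda>y. (norm y)\<^sup>2)"
    unfolding D_def by (subst integrable_density) (use integrable_gauss_dens_norm_power2[OF t, of x] in auto)
  moreover have "(\<integral>y. gauss_dens d y w \<partial>D) = gauss_dens (t + d) x w" for w
    unfolding D_def by (subst integral_density) (use integral_gauss_dens_conv[OF t d] in auto)
  ultimately have "(\<integral>y. gauss_smooth d h y \<partial>D) = gauss_smooth (t + d) h x"
    using integral_gauss_smooth[of D d h a b, OF _ _ d _ h_le b] by (simp add: D_def gauss_smooth_def)
  then show ?thesis
    by (simp add: D_def gauss_smooth_def[of t] integral_density)
qed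

lemma gauss_dens_le_wider:
  fixes x x' y :: "'a::euclidean_space"
  assumes s: "0 < s" and r: "norm (x' - x) \<le> r"
  shows "gauss_dens s x' y
    \<le> gauss_dens s (0::'a) 0 * exp (r\<^sup>2 / (2 * s)) / gauss_dens (2 * s) (0::'a) 0 * gauss_dens (2 * s) x y"
proof -
  have "(norm (y - x))\<^sup>2 \<le> 2 * (norm (y - x'))\<^sup>2 + 2 * (norm (x' - x))\<^sup>2"
    using power2_norm_add_le[of "y - x'" "x' - x"] by simp
  also have "(norm (x' - x))\<^sup>2 \<le> r\<^sup>2"
    using r by (simp add: power_mono)
  finally have "- (norm (y - x'))\<^sup>2 / (2 * s) \<le> r\<^sup>2 / (2 * s) + - (norm (y - x))\<^sup>2 / (2 * (2 * s))"
    using s by (simp add: field_simps)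
  then have "exp (- (norm (y - x'))\<^sup>2 / (2 * s)) \<le> exp (r\<^sup>2 / (2 * s)) * exp (- (norm (y - x))\<^sup>2 / (2 * (2 * s)))"
    by (simp flip: exp_add)
  then show ?thesis
    using gauss_dens_pos[OF s, of "0::'a" 0] gauss_dens_pos[of "2 * s" "0::'a" 0] s
    by (subst (1 2) gauss_dens_eq_peak) (simp add: mult_left_mono)
qed

lemma continuous_gauss_smooth:
  fixes h :: "'a::euclidean_space \<Rightarrow> real"
  assumes s: "0 < s" and [measurable]: "h \<in> borel_measurable borel"
    and h_le: "\<And>y. \<bar>h y\<bar> \<le> a + b * (norm y)\<^sup>2" and b: "0 \<le> b"
  shows "continuous (at x) (gauss_smooth s h)"
  unfolding continuous_at_sequentially
proof (intro allI impI)
  fix X :: "nat \<Rightarrow> 'a" assume X: "X \<longlonglongrightarrow> x"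
  then have "Bseq (\<lambda>k. X k - x)"
    by (metis LIM_zero convergentI convergent_imp_Bseq)
  then obtain r where r: "\<And>k. norm (X k - x) \<le> r"
    by (metis BseqE)
  define C where "C = gauss_dens s (0::'a) 0 * exp (r\<^sup>2 / (2 * s)) / gauss_dens (2 * s) (0::'a) 0"
  have "0 \<le> C" using s by (simp add: C_def)
  have "0 \<le> a" using h_le[of 0] by simp
  define dom where "dom y = C * (gauss_dens (2 * s) x y * (a + b * (norm y)\<^sup>2))" for y
  have int_dom: "integrable lborel dom"
    unfolding dom_def using \<open>0 \<le> a\<close> b s
    by (intro integrable_mult_right integrable_gauss_dens_mult[of _ _ a b]) auto
  show "(gauss_smooth s h \<circ> X) \<longlonglongrightarrow> gauss_smooth s h x"
    unfolding comp_def gauss_smooth_def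
  proof (rule integral_dominated_convergence[OF _ _ int_dom])
    show "AE y in lborel. (\<lambda>k. gauss_dens s (X k) y * h y) \<longlonglongrightarrow> gauss_dens s x y * h y"
      unfolding gauss_dens_def using X s by (intro AE_I2 tendsto_intros) auto
    show "AE y in lborel. norm (gauss_dens s (X k) y * h y) \<le> dom y" for k
    proof (rule AE_I2)
      fix y
      have "norm (gauss_dens s (X k) y * h y) \<le> gauss_dens s (X k) y * (a + b * (norm y)\<^sup>2)"
        by (simp add: abs_mult mult_left_mono h_le)
      also have "\<dots> \<le> C * gauss_dens (2 * s) x y * (a + b * (norm y)\<^sup>2)"
        using gauss_dens_le_wider[OF s r[of k], of y] \<open>0 \<le> a\<close> b
        by (intro mult_right_mono) (auto simp: C_def)
      finally show "norm (gauss_dens s (X k) y * h y) \<le> dom y"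
        by (simp add: dom_def ac_simps)
    qed
  qed measurable
qed

section \<open>Output densities\<close>

lemma input_distD:
  assumes "input_dist R Q"
  shows "prob_space Q" "sets Q = sets borel" "space Q = UNIV" "AE x in Q. norm x \<le> R"
proof -
  show "prob_space Q" and sets_Q: "sets Q = sets borel"
    using assms by (auto simp: input_dist_def)
  show space_Q: "space Q = UNIV"
    using sets_eq_imp_space_eq[OF sets_Q] by simp
  have "- cball 0 R \<in> null_sets Q"
    using assms sets_Q by (auto simp: input_dist_def null_sets_def)
  then show "AE x in Q. norm x \<le> R"
    by (rule AE_I') (auto simp: space_Q)
qed

lemma
  fixes f :: "'a::euclidean_space \<Rightarrow> real"
  assumes Q: "input_dist R Q" and [measurable]: "f \<in> borel_measurable borel"
    and f_le: "\<And>x. \<bar>f x\<bar> \<le> a + b * (norm x)\<^sup>2" and b: "0 \<le> b"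
  shows integrable_input_quadratic: "integrable Q f"
    and abs_integral_input_le: "\<bar>\<integral>x. f x \<partial>Q\<bar> \<le> a + b * R\<^sup>2"
proof -
  interpret prob_space Q using input_distD[OF Q] by simp
  have f_bounded: "AE x in Q. \<bar>f x\<bar> \<le> a + b * R\<^sup>2"
    using input_distD(4)[OF Q]
  proof eventually_elim
    case (elim x)
    then have "b * (norm x)\<^sup>2 \<le> b * R\<^sup>2"
      using b by (intro mult_left_mono power_mono) auto
    then show ?case using f_le[of x] by simp
  qed
  have "f \<in> borel_measurable Q"
    by (rule measurable_sets_borel[OF input_distD(2)[OF Q]]) measurable
  then show int: "integrable Q f"
    using f_bounded by (intro integrable_const_bound[where B="a + b * R\<^sup>2"]) auto
  have "\<bar>\<integral>x. f x \<partial>Q\<bar> \<le> (\<integral>x. \<bar>f x\<bar> \<partial>Q)"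
    using integral_norm_bound[of Q f] by simp
  also have "\<dots> \<le> (\<integral>x. a + b * R\<^sup>2 \<partial>Q)"
    using f_bounded int by (intro integral_mono_AE) auto
  finally show "\<bar>\<integral>x. f x \<partial>Q\<bar> \<le> a + b * R\<^sup>2"
    by (simp add: prob_space)
qed

lemma integrable_gauss_dens_input:
  assumes Q: "input_dist R Q" and s: "0 < s"
  shows "integrable Q (\<lambda>x. gauss_dens s x (y::'a::euclidean_space))"
  using integrable_input_quadratic[OF Q, of "\<lambda>x. gauss_dens s x y" "gauss_dens s (0::'a) 0" 0]
  by (simp add: gauss_dens_le_peak[OF s])

lemma out_dens_le_peak:
  assumes Q: "input_dist R Q" and s: "0 < s"
  shows "out_dens s Q (y::'a::euclidean_space) \<le> gauss_dens s (0::'a) 0"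
proof -
  interpret prob_space Q using input_distD[OF Q] by simp
  have "out_dens s Q y \<le> (\<integral>x. gauss_dens s (0::'a) 0 \<partial>Q)"
    unfolding out_dens_def
    by (rule integral_mono[OF integrable_gauss_dens_input[OF Q s]]) (auto simp: gauss_dens_le_peak s)
  then show ?thesis by (simp add: prob_space)
qed

lemma out_dens_ge:
  assumes Q: "input_dist R Q" and s: "0 < s"
  shows "gauss_dens s (0::'a::euclidean_space) 0 * exp (- (norm y + R)\<^sup>2 / (2 * s)) \<le> out_dens s Q (y::'a)"
proof -
  interpret prob_space Q using input_distD[OF Q] by simp
  have "gauss_dens s (0::'a) 0 * exp (- (norm y + R)\<^sup>2 / (2 * s)) \<le> gauss_dens s x y" if "norm x \<le> R" for x
  proof -
    have "norm (y - x) \<le> norm y + R"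
      using that norm_triangle_ineq4[of y x] by linarith
    then have "(norm (y - x))\<^sup>2 \<le> (norm y + R)\<^sup>2"
      by (simp add: power_mono)
    then have "exp (- (norm y + R)\<^sup>2 / (2 * s)) \<le> exp (- (norm (y - x))\<^sup>2 / (2 * s))"
      using s by (simp add: divide_right_mono)
    from mult_left_mono[OF this, of "gauss_dens s (0::'a) 0"] show ?thesis
      by (subst (2) gauss_dens_eq_peak) simp
  qed
  then have "(\<integral>x. gauss_dens s (0::'a) 0 * exp (- (norm y + R)\<^sup>2 / (2 * s)) \<partial>Q) \<le> out_dens s Q y"
    unfolding out_dens_def using input_distD(4)[OF Q]
    by (intro integral_mono_AE integrable_gauss_dens_input[OF Q s]) auto
  then show ?thesis by (simp add: prob_space)
qed

lemma out_dens_pos: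
  assumes Q: "input_dist R Q" and s: "0 < s"
  shows "0 < out_dens s Q (y::'a::euclidean_space)"
  using out_dens_ge[OF Q s, of y] gauss_dens_pos[OF s, of "0::'a" 0]
  by (smt (verit) exp_gt_zero mult_pos_pos)

lemma out_dens_measurable:
  assumes Q: "input_dist R Q"
  shows "out_dens s Q \<in> borel_measurable (borel :: 'a::euclidean_space measure)"
proof -
  interpret prob_space Q using input_distD[OF Q] by simp
  have sets_pair: "sets (borel \<Otimes>\<^sub>M Q) = sets (borel \<Otimes>\<^sub>M (borel :: 'a measure))"
    using input_distD(2)[OF Q] by (intro sets_pair_measure_cong) auto
  have "(\<lambda>p::'a \<times> 'a. gauss_dens s (snd p) (fst p)) \<in> borel_measurable (borel \<Otimes>\<^sub>M borel)"
    by measurable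
  then have "(\<lambda>p::'a \<times> 'a. gauss_dens s (snd p) (fst p)) \<in> borel_measurable (borel \<Otimes>\<^sub>M Q)"
    by (subst measurable_cong_sets[OF sets_pair refl])
  then show ?thesis
    unfolding out_dens_def[abs_def] by (intro borel_measurable_lebesgue_integral) (simp add: case_prod_beta)
qed

lemma ln_out_dens_measurable:
  "input_dist R Q \<Longrightarrow> (\<lambda>y. ln (out_dens s Q y)) \<in> borel_measurable (borel :: 'a::euclidean_space measure)"
  using out_dens_measurable by measurable

lemma abs_ln_out_dens_le:
  assumes Q: "input_dist R Q" and s: "0 < s"
  shows "\<bar>ln (out_dens s Q (y::'a::euclidean_space))\<bar>
    \<le> (\<bar>ln (gauss_dens s (0::'a) 0)\<bar> + R\<^sup>2 / s) + 1 / s * (norm y)\<^sup>2"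
proof -
  define k where "k = gauss_dens s (0::'a) 0"
  have k: "0 < k" using gauss_dens_pos[OF s] by (simp add: k_def)
  have upper: "ln (out_dens s Q y) \<le> ln k"
    using out_dens_le_peak[OF Q s, of y] out_dens_pos[OF Q s, of y] by (simp add: k_def)
  have "ln (k * exp (- (norm y + R)\<^sup>2 / (2 * s))) \<le> ln (out_dens s Q y)"
    using out_dens_ge[OF Q s, of y] out_dens_pos[OF Q s, of y] k by (simp add: k_def)
  then have lower: "ln k - (norm y + R)\<^sup>2 / (2 * s) \<le> ln (out_dens s Q y)"
    using k by (simp add: ln_mult)
  have "(norm y + R)\<^sup>2 / (2 * s) \<le> (2 * (norm y)\<^sup>2 + 2 * R\<^sup>2) / (2 * s)"
    using power2_norm_add_le[of "norm y" R] s by (intro divide_right_mono) auto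
  also have "\<dots> = R\<^sup>2 / s + 1 / s * (norm y)\<^sup>2"
    using s by (simp add: field_simps)
  finally have "(norm y + R)\<^sup>2 / (2 * s) \<le> R\<^sup>2 / s + 1 / s * (norm y)\<^sup>2" .
  moreover have "0 \<le> R\<^sup>2 / s + 1 / s * (norm y)\<^sup>2"
    using s by simp
  ultimately show ?thesis
    using upper lower unfolding k_def[symmetric] by linarith
qed

lemma
  fixes h :: "'a::euclidean_space \<Rightarrow> real"
  assumes Q: "input_dist R Q" and s: "0 < s" and [measurable]: "h \<in> borel_measurable borel"
    and h_le: "\<And>y. \<bar>h y\<bar> \<le> a + b * (norm y)\<^sup>2" and b: "0 \<le> b"
  shows integrable_out_dens_mult: "integrable lborel (\<lambda>y. out_dens s Q y * h y)"
    and integral_input_gauss_smooth: "(\<integral>x. gauss_smooth s h x \<partial>Q) = (\<integral>y. out_dens s Q y * h y \<partial>lborel)"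
proof -
  have "finite_measure Q"
    using input_distD(1)[OF Q] by (simp add: prob_space_def)
  moreover have "integrable Q (\<lambda>x. (norm x)\<^sup>2)"
    by (rule integrable_input_quadratic[OF Q, of _ 0 1]) auto
  ultimately show "integrable lborel (\<lambda>y. out_dens s Q y * h y)"
    and "(\<integral>x. gauss_smooth s h x \<partial>Q) = (\<integral>y. out_dens s Q y * h y \<partial>lborel)"
    using integrable_gauss_convolution_mult[OF _ input_distD(2)[OF Q] s _ h_le b]
      integral_gauss_smooth[OF _ input_distD(2)[OF Q] s _ h_le b]
    by (simp_all add: out_dens_def[abs_def])
qed

lemma
  assumes Q: "input_dist R Q" and s: "0 < s"
  shows integrable_out_dens: "integrable lborel (out_dens s (Q :: 'a::euclidean_space measure))"
    and integral_out_dens: "(\<integral>y. out_dens s Q y \<partial>lborel) = 1"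
proof -
  interpret prob_space Q using input_distD[OF Q] by simp
  have "gauss_smooth s (\<lambda>_. 1) x = 1" for x :: 'a
    using s by (simp add: gauss_smooth_def)
  then show "integrable lborel (out_dens s Q)" "(\<integral>y. out_dens s Q y \<partial>lborel) = 1"
    using integrable_out_dens_mult[OF Q s, of "\<lambda>_. 1" 1 0] integral_input_gauss_smooth[OF Q s, of "\<lambda>_. 1" 1 0]
    by (simp_all add: prob_space)
qed

section \<open>Entropies and the function Xi\<close>

definition out_entropy :: "real \<Rightarrow> 'a::euclidean_space measure \<Rightarrow> real" where
  "out_entropy s Q = - (\<integral>y. out_dens s Q y * ln (out_dens s Q y) \<partial>lborel)"

definition out_cross_entropy :: "real \<Rightarrow> 'a::euclidean_space measure \<Rightarrow> 'a \<Rightarrow> real" where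
  "out_cross_entropy s Q x = - gauss_smooth s (\<lambda>y. ln (out_dens s Q y)) x"

lemma out_cross_entropy_measurable:
  "input_dist R Q \<Longrightarrow> out_cross_entropy s Q \<in> borel_measurable borel"
  unfolding out_cross_entropy_def[abs_def] using ln_out_dens_measurable by measurable

lemma abs_out_cross_entropy_le:
  assumes Q: "input_dist R Q" and s: "0 < s"
  shows "\<bar>out_cross_entropy s Q (x::'a::euclidean_space)\<bar>
    \<le> (\<bar>ln (gauss_dens s (0::'a) 0)\<bar> + R\<^sup>2 / s + 2 * real DIM('a)) + 2 / s * (norm x)\<^sup>2"
  using abs_gauss_smooth_le[OF s ln_out_dens_measurable[OF Q] abs_ln_out_dens_le[OF Q s], of x] s
  by (simp add: out_cross_entropy_def)

lemma continuous_out_cross_entropy: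
  assumes Q: "input_dist R Q" and s: "0 < s"
  shows "continuous (at x) (out_cross_entropy s Q)"
  unfolding out_cross_entropy_def[abs_def]
  using continuous_gauss_smooth[OF s ln_out_dens_measurable[OF Q] abs_ln_out_dens_le[OF Q s]] s
  by (intro continuous_intros) auto

lemma rel_ent_gauss_dens_out_dens:
  fixes x :: "'a::euclidean_space"
  assumes Q: "input_dist R Q" and s: "0 < s"
  shows "rel_ent (gauss_dens s x) (out_dens s Q)
    = out_cross_entropy s Q x - real DIM('a) / 2 * ln (2 * pi * exp 1 * s)"
proof -
  define k where "k = ln (gauss_dens s (0::'a) 0)"
  have pointwise: "gauss_dens s x y * ln (gauss_dens s x y / out_dens s Q y)
      = (k * gauss_dens s x y - 1 / (2 * s) * (gauss_dens s x y * (norm (y - x))\<^sup>2))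
        - gauss_dens s x y * ln (out_dens s Q y)" for y
  proof -
    have "ln (gauss_dens s x y / out_dens s Q y) = k - (norm (y - x))\<^sup>2 / (2 * s) - ln (out_dens s Q y)"
      using out_dens_pos[OF Q s, of y] gauss_dens_pos[OF s, of x y]
      by (simp add: ln_div ln_gauss_dens[OF s, of x y] k_def)
    then show ?thesis
      by (simp add: right_diff_distrib mult.commute mult.left_commute)
  qed
  have "rel_ent (gauss_dens s x) (out_dens s Q)
      = (\<integral>y. k * gauss_dens s x y - 1 / (2 * s) * (gauss_dens s x y * (norm (y - x))\<^sup>2) \<partial>lborel)
        - gauss_smooth s (\<lambda>y. ln (out_dens s Q y)) x"
    unfolding rel_ent_def pointwise gauss_smooth_def
  proof (rule Bochner_Integration.integral_diff)
    show "integrable lborel (\<lambda>y. k * gauss_dens s x y - 1 / (2 * s) * (gauss_dens s x y * (norm (y - x))\<^sup>2))"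
      using integrable_gauss_dens_second_moment[OF s, of x] s by auto
    show "integrable lborel (\<lambda>y. gauss_dens s x y * ln (out_dens s Q y))"
      by (rule integrable_gauss_dens_mult[OF s ln_out_dens_measurable[OF Q] abs_ln_out_dens_le[OF Q s]]) (use s in simp)
  qed
  also have "(\<integral>y. k * gauss_dens s x y - 1 / (2 * s) * (gauss_dens s x y * (norm (y - x))\<^sup>2) \<partial>lborel)
      = k - real DIM('a) / 2"
    using integrable_gauss_dens_second_moment[OF s, of x] s by (simp add: integral_gauss_dens_second_moment)
  also have "k = - real DIM('a) / 2 * ln (2 * pi * s)"
    using ln_gauss_dens_peak[OF s] by (simp add: k_def)
  also have "ln (2 * pi * s) = ln (2 * pi * exp 1 * s) - 1"
    using s by (simp add: ln_mult)
  finally show ?thesis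
    by (simp add: out_cross_entropy_def algebra_simps)
qed

lemma
  assumes Q: "input_dist R Q" and s: "0 < s"
  shows integrable_out_cross_entropy: "integrable Q (out_cross_entropy s Q)"
    and integral_out_cross_entropy: "(\<integral>x. out_cross_entropy s Q x \<partial>Q) = out_entropy s Q"
proof -
  show "integrable Q (out_cross_entropy s Q)"
    using s by (intro integrable_input_quadratic[OF Q out_cross_entropy_measurable[OF Q]
        abs_out_cross_entropy_le[OF Q s]]) auto
  then show "(\<integral>x. out_cross_entropy s Q x \<partial>Q) = out_entropy s Q"
    using integral_input_gauss_smooth[OF Q s ln_out_dens_measurable[OF Q] abs_ln_out_dens_le[OF Q s]] s
    by (simp add: out_cross_entropy_def out_entropy_def)
qed

lemma mutual_info_eq_out_entropy:
  fixes Q :: "'a::euclidean_space measure"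
  assumes Q: "input_dist R Q" and s: "0 < s"
  shows "mutual_info s Q = out_entropy s Q - real DIM('a) / 2 * ln (2 * pi * exp 1 * s)"
proof -
  interpret prob_space Q using input_distD[OF Q] by simp
  show ?thesis
    unfolding mutual_info_def rel_ent_gauss_dens_out_dens[OF Q s]
    using integrable_out_cross_entropy[OF Q s] by (simp add: integral_out_cross_entropy[OF Q s] prob_space)
qed

lemma gauss_entropy_diff:
  assumes "0 < s1" and "0 < s2"
  shows "n / 2 * ln (2 * pi * exp 1 * s2) - n / 2 * ln (2 * pi * exp 1 * s1) = n * ln (sqrt s2 / sqrt s1)"
proof -
  have "ln (2 * pi * exp 1 * s2) - ln (2 * pi * exp 1 * s1) = 2 * ln (sqrt s2 / sqrt s1)"
    using assms by (simp add: ln_mult ln_div ln_sqrt)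
  moreover have "n / 2 * ln (2 * pi * exp 1 * s2) - n / 2 * ln (2 * pi * exp 1 * s1)
      = n / 2 * (ln (2 * pi * exp 1 * s2) - ln (2 * pi * exp 1 * s1))"
    by (simp add: right_diff_distrib)
  ultimately show ?thesis
    by simp
qed

lemma Xi_eq_out_cross_entropy:
  fixes x :: "'a::euclidean_space"
  assumes P: "input_dist R P" and s1: "0 < s1" and s2: "0 < s2"
  shows "Xi s1 s2 P x
    = out_cross_entropy s1 P x - out_cross_entropy s2 P x + real DIM('a) * ln (sqrt s2 / sqrt s1)"
  unfolding Xi_def rel_ent_gauss_dens_out_dens[OF P s1] rel_ent_gauss_dens_out_dens[OF P s2]
    gauss_entropy_diff[OF s1 s2, symmetric] by simp

lemma gfun_eq_gauss_smooth:
  fixes P :: "'a::euclidean_space measure"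
  assumes P: "input_dist R P" and s1: "0 < s1" and s12: "s1 < s2"
  shows "gfun s1 s2 P y = gauss_smooth (s2 - s1) (\<lambda>w. ln (out_dens s2 P w)) y - ln (out_dens s1 P y)
    + real DIM('a) * ln (sqrt s2 / sqrt s1)"
proof -
  define d where "d = s2 - s1"
  have d: "0 < d" and s2: "0 < s2" using s1 s12 by (auto simp: d_def)
  define \<phi> where "\<phi> w = gauss_dens d y w * ln (out_dens s2 P w)" for w
  have \<phi>_meas: "\<phi> \<in> borel_measurable borel"
    unfolding \<phi>_def[abs_def] using ln_out_dens_measurable[OF P] by measurable
  have \<phi>_shift: "\<phi> (y + z) = gauss_dens d 0 z * ln (out_dens s2 P (y + z))" for z
    unfolding \<phi>_def by (subst gauss_dens_shift) simp
  have "integrable lborel \<phi>"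
    unfolding \<phi>_def using s2
    by (intro integrable_gauss_dens_mult[OF d ln_out_dens_measurable[OF P] abs_ln_out_dens_le[OF P s2]]) simp
  then have int: "integrable lborel (\<lambda>z. gauss_dens d 0 z * ln (out_dens s2 P (y + z)))"
    using integrable_lborel_translate_iff[OF \<phi>_meas, of y] unfolding \<phi>_shift by simp
  have "gauss_dens d 0 z * ln (out_dens s2 P (y + z) / out_dens s1 P y)
     = gauss_dens d 0 z * ln (out_dens s2 P (y + z)) - ln (out_dens s1 P y) * gauss_dens d 0 z" for z
    using out_dens_pos[OF P s1, of y] out_dens_pos[OF P s2, of "y + z"]
    by (simp add: ln_div right_diff_distrib)
  then have "(\<integral>z. gauss_dens d 0 z * ln (out_dens s2 P (y + z) / out_dens s1 P y) \<partial>lborel)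
     = (\<integral>z. gauss_dens d 0 z * ln (out_dens s2 P (y + z)) - ln (out_dens s1 P y) * gauss_dens d 0 z \<partial>lborel)"
    by simp
  also have "\<dots> = (\<integral>z. \<phi> (y + z) \<partial>lborel) - ln (out_dens s1 P y)"
    using int d by (simp add: \<phi>_shift)
  also have "(\<integral>z. \<phi> (y + z) \<partial>lborel) = gauss_smooth d (\<lambda>w. ln (out_dens s2 P w)) y"
    unfolding integral_lborel_translate[OF \<phi>_meas] by (simp add: gauss_smooth_def \<phi>_def[abs_def])
  finally show ?thesis
    unfolding gfun_def d_def by simp
qed

lemma Xi_eq_integral_gfun:
  fixes P :: "'a::euclidean_space measure"
  assumes P: "input_dist R P" and s1: "0 < s1" and s12: "s1 < s2"
  shows "Xi s1 s2 P x = (\<integral>y. gauss_dens s1 x y * gfun s1 s2 P y \<partial>lborel)"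
proof -
  define d where "d = s2 - s1"
  have d: "0 < d" and s2: "0 < s2" using s1 s12 by (auto simp: d_def)
  define G where "G = gauss_smooth d (\<lambda>w. ln (out_dens s2 P w))"
  define c where "c = real DIM('a) * ln (sqrt s2 / sqrt s1)"
  note ln_f2 = ln_out_dens_measurable[OF P] abs_ln_out_dens_le[OF P s2]
  have G_meas: "G \<in> borel_measurable borel"
    unfolding G_def using ln_out_dens_measurable[OF P] by measurable
  have "integrable lborel (\<lambda>y. gauss_dens s1 x y * G y)"
    using s2 by (intro integrable_gauss_dens_mult[OF s1 G_meas abs_gauss_smooth_le[OF d ln_f2, folded G_def]]) auto
  moreover have "integrable lborel (\<lambda>y. gauss_dens s1 x y * ln (out_dens s1 P y))"
    using s1 by (intro integrable_gauss_dens_mult[OF s1 ln_out_dens_measurable[OF P] abs_ln_out_dens_le[OF P s1]]) auto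
  moreover have "gauss_dens s1 x y * gfun s1 s2 P y
     = gauss_dens s1 x y * G y - gauss_dens s1 x y * ln (out_dens s1 P y) + c * gauss_dens s1 x y" for y
    unfolding gfun_eq_gauss_smooth[OF P s1 s12] G_def d_def c_def by (simp add: algebra_simps)
  ultimately have "(\<integral>y. gauss_dens s1 x y * gfun s1 s2 P y \<partial>lborel)
     = gauss_smooth s1 G x + out_cross_entropy s1 P x + c"
    using s1 by (simp add: gauss_smooth_def out_cross_entropy_def)
  also have "gauss_smooth s1 G x = - out_cross_entropy s2 P x"
    unfolding G_def out_cross_entropy_def using gauss_smooth_gauss_smooth[OF s1 d ln_f2] s2
    by (simp add: d_def)
  finally show ?thesis
    by (simp add: Xi_eq_out_cross_entropy[OF P s1 s2] c_def)
qed

lemma Xi_eq_out_cross_entropy_fun: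
  fixes P :: "'a::euclidean_space measure"
  assumes P: "input_dist R P" and s1: "0 < s1" and s2: "0 < s2"
  shows "Xi s1 s2 P = (\<lambda>x. out_cross_entropy s1 P x - out_cross_entropy s2 P x
      + real DIM('a) * ln (sqrt s2 / sqrt s1))"
  using Xi_eq_out_cross_entropy[OF P s1 s2] by (intro ext)

lemma
  fixes P :: "'a::euclidean_space measure"
  assumes P: "input_dist R P" and s1: "0 < s1" and s2: "0 < s2"
  shows integrable_Xi: "integrable P (Xi s1 s2 P)"
    and integral_Xi: "(\<integral>x. Xi s1 s2 P x \<partial>P) = mutual_info s1 P - mutual_info s2 P"
proof -
  interpret prob_space P using input_distD[OF P] by simp
  note Xi = Xi_eq_out_cross_entropy_fun[OF P s1 s2]
  note int = integrable_out_cross_entropy[OF P s1] integrable_out_cross_entropy[OF P s2]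
  show "integrable P (Xi s1 s2 P)"
    unfolding Xi using int by auto
  show "(\<integral>x. Xi s1 s2 P x \<partial>P) = mutual_info s1 P - mutual_info s2 P"
    unfolding Xi gauss_entropy_diff[OF s1 s2, symmetric] using int
    by (simp add: integral_out_cross_entropy[OF P] mutual_info_eq_out_entropy[OF P] s1 s2 prob_space)
qed

lemma Xi_measurable:
  assumes P: "input_dist R P" and s1: "0 < s1" and s2: "0 < s2"
  shows "Xi s1 s2 P \<in> borel_measurable borel"
  unfolding Xi_eq_out_cross_entropy_fun[OF P s1 s2]
  using out_cross_entropy_measurable[OF P, of s1] out_cross_entropy_measurable[OF P, of s2] by measurable

lemma continuous_Xi:
  assumes P: "input_dist R P" and s1: "0 < s1" and s2: "0 < s2"
  shows "continuous (at x) (Xi s1 s2 P)"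
  unfolding Xi_eq_out_cross_entropy_fun[OF P s1 s2]
  using continuous_out_cross_entropy[OF P s1] continuous_out_cross_entropy[OF P s2]
  by (intro continuous_intros)

lemma Xi_quadratic_bound:
  assumes s1: "0 < s1" and s2: "0 < s2"
  obtains a b where "0 \<le> b"
    and "\<And>P x. input_dist R P \<Longrightarrow> \<bar>Xi s1 s2 P (x::'a::euclidean_space)\<bar> \<le> a + b * (norm x)\<^sup>2"
proof
  fix P :: "'a measure" and x :: 'a
  assume P: "input_dist R P"
  show "\<bar>Xi s1 s2 P x\<bar>
    \<le> ((\<bar>ln (gauss_dens s1 (0::'a) 0)\<bar> + R\<^sup>2 / s1 + 2 * real DIM('a))
        + (\<bar>ln (gauss_dens s2 (0::'a) 0)\<bar> + R\<^sup>2 / s2 + 2 * real DIM('a))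
        + \<bar>real DIM('a) * ln (sqrt s2 / sqrt s1)\<bar>) + (2 / s1 + 2 / s2) * (norm x)\<^sup>2"
    using abs_out_cross_entropy_le[OF P s1, of x] abs_out_cross_entropy_le[OF P s2, of x]
      abs_ge_self[of "real DIM('a) * ln (sqrt s2 / sqrt s1)"]
      abs_ge_minus_self[of "real DIM('a) * ln (sqrt s2 / sqrt s1)"]
    unfolding Xi_eq_out_cross_entropy[OF P s1 s2] by (simp add: algebra_simps abs_le_iff)
qed (use s1 s2 in auto)

lemma secrecy_rate_le_cap:
  fixes Q :: "'a::euclidean_space measure"
  assumes Q: "input_dist R Q" and s1: "0 < s1" and s2: "0 < s2"
  shows "mutual_info s1 Q - mutual_info s2 Q \<le> secrecy_cap s1 s2 R TYPE('a)"
  unfolding secrecy_cap_def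
proof (rule cSup_upper)
  obtain a b where b: "0 \<le> b"
    and Xi_le: "\<And>P x. input_dist R P \<Longrightarrow> \<bar>Xi s1 s2 P (x::'a)\<bar> \<le> a + b * (norm x)\<^sup>2"
    by (rule Xi_quadratic_bound[OF s1 s2, where R=R]) blast
  have "mutual_info s1 P - mutual_info s2 P \<le> a + b * R\<^sup>2" if P: "input_dist R P" for P :: "'a measure"
    using abs_integral_input_le[OF P Xi_measurable[OF P s1 s2] Xi_le[OF P] b]
    unfolding integral_Xi[OF P s1 s2] by (simp add: abs_le_iff)
  then show "bdd_above {mutual_info s1 P - mutual_info s2 (P :: 'a measure) | P. input_dist R P}"
    by (intro bdd_aboveI[where M="a + b * R\<^sup>2"]) auto
  show "mutual_info s1 Q - mutual_info s2 Q \<in> {mutual_info s1 P - mutual_info s2 (P :: 'a measure) | P. input_dist R P}"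
    using Q by blast
qed

section \<open>Perturbation towards a point mass\<close>

text \<open>The mixture (1 - t) P + t \<delta>(x0), as the law of a Bernoulli(t) choice between x0 and a sample of P.\<close>

definition point_mixture :: "real \<Rightarrow> 'a::topological_space \<Rightarrow> 'a measure \<Rightarrow> 'a measure" where
  "point_mixture t x0 P = Giry_Monad.bind (measure_pmf (bernoulli_pmf t)) (\<lambda>b. if b then return borel x0 else P)"

context
  fixes t :: real and x0 :: "'a::topological_space" and P :: "'a measure"
  assumes t: "0 \<le> t" "t \<le> 1" and P: "prob_space P" "sets P = sets borel"
begin

lemma sets_point_mixture: "sets (point_mixture t x0 P) = sets borel"
  unfolding point_mixture_def using P by (subst sets_bind) auto

lemma nn_integral_point_mixture:
  assumes [measurable]: "f \<in> borel_measurable borel"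
  shows "(\<integral>\<^sup>+x. f x \<partial>point_mixture t x0 P) = ennreal t * f x0 + ennreal (1 - t) * (\<integral>\<^sup>+x. f x \<partial>P)"
proof -
  have "return borel x0 \<in> space (subprob_algebra borel)" and "P \<in> space (subprob_algebra borel)"
    using P by (simp_all add: space_subprob_algebra subprob_space_return prob_space_imp_subprob_space)
  then have "(\<lambda>b. if b then return borel x0 else P) \<in> measure_pmf (bernoulli_pmf t) \<rightarrow>\<^sub>M subprob_algebra borel"
    by auto
  then have "(\<integral>\<^sup>+x. f x \<partial>point_mixture t x0 P)
      = (\<integral>\<^sup>+b. (\<integral>\<^sup>+x. f x \<partial>(if b then return borel x0 else P)) \<partial>measure_pmf (bernoulli_pmf t))"
    unfolding point_mixture_def by (rule nn_integral_bind[rotated]) simp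
  also have "\<dots> = (\<integral>\<^sup>+x. f x \<partial>return borel x0) * ennreal t + (\<integral>\<^sup>+x. f x \<partial>P) * ennreal (1 - t)"
    using t by (subst nn_integral_bernoulli_pmf) auto
  finally show ?thesis
    by (simp add: nn_integral_return ac_simps)
qed

lemma prob_space_point_mixture: "prob_space (point_mixture t x0 P)"
proof (rule prob_spaceI)
  have "emeasure (point_mixture t x0 P) (space (point_mixture t x0 P)) = (\<integral>\<^sup>+x. 1 \<partial>point_mixture t x0 P)"
    by simp
  also have "\<dots> = ennreal t + ennreal (1 - t) * emeasure P (space P)"
    by (subst nn_integral_point_mixture) auto
  also have "\<dots> = 1"
    using t prob_space.emeasure_space_1[OF P(1)] by (simp flip: ennreal_plus)
  finally show "emeasure (point_mixture t x0 P) (space (point_mixture t x0 P)) = 1" .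
qed

lemma emeasure_point_mixture:
  assumes A: "A \<in> sets borel"
  shows "emeasure (point_mixture t x0 P) A = ennreal t * indicator A x0 + ennreal (1 - t) * emeasure P A"
  using A sets_point_mixture P(2) nn_integral_point_mixture[of "indicator A"]
  by (simp flip: nn_integral_indicator)

lemma
  fixes f :: "'a \<Rightarrow> real"
  assumes [measurable]: "f \<in> borel_measurable borel" and f_nonneg: "\<And>x. 0 \<le> f x" and int: "integrable P f"
  shows integrable_point_mixture_nonneg: "integrable (point_mixture t x0 P) f"
    and integral_point_mixture_nonneg:
      "(\<integral>x. f x \<partial>point_mixture t x0 P) = t * f x0 + (1 - t) * (\<integral>x. f x \<partial>P)"
proof -
  have "(\<integral>\<^sup>+x. f x \<partial>P) = (\<integral>x. f x \<partial>P)"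
    using int f_nonneg by (subst nn_integral_eq_integral) auto
  then have "(\<integral>\<^sup>+x. f x \<partial>point_mixture t x0 P) = t * f x0 + (1 - t) * (\<integral>x. f x \<partial>P)"
    using t f_nonneg Bochner_Integration.integral_nonneg[of P f]
    by (simp add: nn_integral_point_mixture ennreal_mult)
  then have "has_bochner_integral (point_mixture t x0 P) f (t * f x0 + (1 - t) * (\<integral>x. f x \<partial>P))"
    using t f_nonneg Bochner_Integration.integral_nonneg[of P f]
    by (intro has_bochner_integral_nn_integral measurable_sets_borel[OF sets_point_mixture]) auto
  then show "integrable (point_mixture t x0 P) f"
    and "(\<integral>x. f x \<partial>point_mixture t x0 P) = t * f x0 + (1 - t) * (\<integral>x. f x \<partial>P)"
    by (auto dest: integrable.intros has_bochner_integral_integral_eq)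
qed

lemma integral_point_mixture:
  fixes f :: "'a \<Rightarrow> real"
  assumes [measurable]: "f \<in> borel_measurable borel" and int: "integrable P f"
  shows "(\<integral>x. f x \<partial>point_mixture t x0 P) = t * f x0 + (1 - t) * (\<integral>x. f x \<partial>P)"
proof -
  define f_pos f_neg where "f_pos x = max (f x) 0" and "f_neg x = max (- f x) 0" for x
  have f_eq: "f = (\<lambda>x. f_pos x - f_neg x)"
    by (auto simp: f_pos_def f_neg_def)
  have meas: "f_pos \<in> borel_measurable borel" "f_neg \<in> borel_measurable borel"
    unfolding f_pos_def[abs_def] f_neg_def[abs_def] by measurable
  have nonneg: "\<And>x. 0 \<le> f_pos x" "\<And>x. 0 \<le> f_neg x"
    by (auto simp: f_pos_def f_neg_def)
  have int_parts: "integrable P f_pos" "integrable P f_neg"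
    unfolding f_pos_def f_neg_def using int by auto
  note pos = integrable_point_mixture_nonneg[OF meas(1) nonneg(1) int_parts(1)]
    integral_point_mixture_nonneg[OF meas(1) nonneg(1) int_parts(1)]
  note neg = integrable_point_mixture_nonneg[OF meas(2) nonneg(2) int_parts(2)]
    integral_point_mixture_nonneg[OF meas(2) nonneg(2) int_parts(2)]
  have M_eq: "(\<integral>x. f x \<partial>point_mixture t x0 P) = (\<integral>x. f_pos x \<partial>point_mixture t x0 P) - (\<integral>x. f_neg x \<partial>point_mixture t x0 P)"
    by (subst f_eq) (use pos neg in simp)
  have P_eq: "(\<integral>x. f x \<partial>P) = (\<integral>x. f_pos x \<partial>P) - (\<integral>x. f_neg x \<partial>P)"
    by (subst f_eq) (use int_parts in simp)
  have x0_eq: "f x0 = f_pos x0 - f_neg x0"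
    by (simp add: f_pos_def f_neg_def)
  show ?thesis
    unfolding M_eq P_eq x0_eq pos(2) neg(2) by (simp add: algebra_simps)
qed

end

lemma input_dist_point_mixture:
  assumes P: "input_dist R P" and x0: "norm x0 \<le> R" and t: "0 \<le> t" "t \<le> 1"
  shows "input_dist R (point_mixture t x0 P)"
  using x0 P emeasure_point_mixture[OF t input_distD(1,2)[OF P], of "- cball 0 R"]
    prob_space_point_mixture[OF t input_distD(1,2)[OF P]] sets_point_mixture[OF t input_distD(1,2)[OF P]]
  by (simp add: input_dist_def)

lemma out_dens_point_mixture:
  assumes P: "input_dist R P" and s: "0 < s" and t: "0 \<le> t" "t \<le> 1"
  shows "out_dens s (point_mixture t x0 P) y = t * gauss_dens s x0 y + (1 - t) * out_dens s P (y::'a::euclidean_space)"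
  unfolding out_dens_def
  by (rule integral_point_mixture[OF t input_distD(1,2)[OF P] _ integrable_gauss_dens_input[OF P s]]) measurable

lemma power2_norm_add_radius_le:
  fixes x0 y :: "'a::real_normed_vector"
  assumes x0: "norm x0 \<le> R"
  shows "(norm y + R)\<^sup>2 + (norm y)\<^sup>2 / 4 \<le> 2 * (norm (y - x0))\<^sup>2 + 11 * R\<^sup>2"
proof -
  have "(norm y)\<^sup>2 \<le> (norm (y - x0) + norm x0)\<^sup>2"
    using norm_triangle_sub[of y x0] by (intro power_mono) auto
  also have "\<dots> \<le> 4 / 3 * (norm (y - x0))\<^sup>2 + 4 * (norm x0)\<^sup>2"
    using power2_add_le_weighted[of "1 / 3" "norm (y - x0)" "norm x0"] by simp
  also have "(norm x0)\<^sup>2 \<le> R\<^sup>2"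
    using x0 by (simp add: power_mono)
  finally have "3 / 4 * (norm y)\<^sup>2 - 3 * R\<^sup>2 \<le> (norm (y - x0))\<^sup>2"
    by simp
  moreover have "(norm y + R)\<^sup>2 \<le> 5 / 4 * (norm y)\<^sup>2 + 5 * R\<^sup>2"
    using power2_add_le_weighted[of "1 / 4" "norm y" R] by simp
  ultimately show ?thesis
    by linarith
qed

text \<open>The ratio g^2 / f of a kernel to the output density has a Gaussian tail; this is what makes
  the chi-square divergence in the perturbation bound below finite.\<close>

lemma gauss_dens_power2_div_out_dens_le:
  fixes P :: "'a::euclidean_space measure"
  assumes P: "input_dist R P" and s: "0 < s" and x0: "norm x0 \<le> R"
  shows "(gauss_dens s x0 y)\<^sup>2 / out_dens s P y
     \<le> gauss_dens s (0::'a) 0 * exp (11 * R\<^sup>2 / (2 * s)) / gauss_dens (4 * s) (0::'a) 0 * gauss_dens (4 * s) 0 y"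
proof -
  define k where "k = gauss_dens s (0::'a) 0"
  have k: "0 < k" and k4: "0 < gauss_dens (4 * s) (0::'a) 0"
    using s by (auto simp: k_def gauss_dens_pos)
  define L where "L = k * exp (- (norm y + R)\<^sup>2 / (2 * s))"
  have "0 < L" using k by (simp add: L_def)
  have sq: "(gauss_dens s x0 y)\<^sup>2 = k * (k * exp (- (norm (y - x0))\<^sup>2 / s))"
    unfolding gauss_dens_eq_peak[of s x0 y] k_def[symmetric]
    by (simp add: power2_eq_square mult_exp_exp field_simps)
  have "(gauss_dens s x0 y)\<^sup>2 / out_dens s P y \<le> (gauss_dens s x0 y)\<^sup>2 / L"
    using \<open>0 < L\<close> out_dens_ge[OF P s, of y] by (intro divide_left_mono) (auto simp: L_def k_def)
  also have "\<dots> = k * exp (- (norm (y - x0))\<^sup>2 / s - - (norm y + R)\<^sup>2 / (2 * s))"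
    unfolding sq L_def exp_diff using k by simp
  also have "\<dots> \<le> k * exp (11 * R\<^sup>2 / (2 * s) + - (norm y)\<^sup>2 / (2 * (4 * s)))"
  proof -
    have "- 2 * (norm (y - x0))\<^sup>2 + (norm y + R)\<^sup>2 \<le> - (norm y)\<^sup>2 / 4 + 11 * R\<^sup>2"
      using power2_norm_add_radius_le[OF x0, of y] by linarith
    then have "(- 2 * (norm (y - x0))\<^sup>2 + (norm y + R)\<^sup>2) / (2 * s) \<le> (- (norm y)\<^sup>2 / 4 + 11 * R\<^sup>2) / (2 * s)"
      using s by (intro divide_right_mono) auto
    then have "- (norm (y - x0))\<^sup>2 / s - - (norm y + R)\<^sup>2 / (2 * s)
        \<le> 11 * R\<^sup>2 / (2 * s) + - (norm y)\<^sup>2 / (2 * (4 * s))"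
      using s by (simp add: add_divide_distrib diff_divide_distrib)
    then show ?thesis
      using k by simp
  qed
  also have "\<dots> = k * exp (11 * R\<^sup>2 / (2 * s)) / gauss_dens (4 * s) (0::'a) 0 * gauss_dens (4 * s) 0 y"
    unfolding exp_add using k4 by (subst (2) gauss_dens_eq_peak) simp
  finally show ?thesis
    by (simp add: k_def)
qed

lemma integrable_chi_square:
  fixes P :: "'a::euclidean_space measure"
  assumes P: "input_dist R P" and s: "0 < s" and x0: "norm x0 \<le> R"
  shows "integrable lborel (\<lambda>y. (gauss_dens s x0 y - out_dens s P y)\<^sup>2 / out_dens s P y)"
proof (rule Bochner_Integration.integrable_bound)
  define K where "K = gauss_dens s (0::'a) 0 * exp (11 * R\<^sup>2 / (2 * s)) / gauss_dens (4 * s) (0::'a) 0"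
  show "integrable lborel (\<lambda>y. 2 * (K * gauss_dens (4 * s) 0 y) + 2 * out_dens s P y)"
    using integrable_out_dens[OF P s] s by auto
  show "(\<lambda>y. (gauss_dens s x0 y - out_dens s P y)\<^sup>2 / out_dens s P y) \<in> borel_measurable lborel"
    using out_dens_measurable[OF P] by measurable
  show "AE y in lborel. norm ((gauss_dens s x0 y - out_dens s P y)\<^sup>2 / out_dens s P y)
      \<le> norm (2 * (K * gauss_dens (4 * s) 0 y) + 2 * out_dens s P y)"
  proof (rule AE_I2)
    fix y
    define g f where "g = gauss_dens s x0 y" and "f = out_dens s P y"
    have f: "0 < f" using out_dens_pos[OF P s] by (simp add: f_def)
    have "(g - f)\<^sup>2 / f \<le> (2 * g\<^sup>2 + 2 * f\<^sup>2) / f"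
      using f power2_norm_add_le[of g "- f"] by (intro divide_right_mono) auto
    also have "\<dots> = 2 * (g\<^sup>2 / f) + 2 * f"
      using f by (simp add: field_simps power2_eq_square)
    also have "\<dots> \<le> 2 * (K * gauss_dens (4 * s) 0 y) + 2 * f"
      using gauss_dens_power2_div_out_dens_le[OF P s x0, of y] by (simp add: K_def g_def f_def)
    finally show "norm ((gauss_dens s x0 y - out_dens s P y)\<^sup>2 / out_dens s P y)
        \<le> norm (2 * (K * gauss_dens (4 * s) 0 y) + 2 * out_dens s P y)"
      using f by (simp add: g_def [symmetric] f_def [symmetric])
  qed
qed

lemma
  fixes a b :: real
  assumes a: "0 < a" and b: "0 < b"
  shows mult_ln_div_ge: "b - a \<le> b * ln (b / a)"
    and mult_ln_div_le: "b * ln (b / a) \<le> b * (b - a) / a"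
proof -
  have "ln (a / b) \<le> a / b - 1" and "ln (b / a) \<le> b / a - 1"
    using a b by (simp_all add: ln_le_minus_one)
  moreover have "ln (a / b) = - ln (b / a)"
    using a b by (simp add: ln_div)
  ultimately have "b * (1 - a / b) \<le> b * ln (b / a)" and "b * ln (b / a) \<le> b * (b / a - 1)"
    using b by (simp_all add: mult_left_mono)
  moreover have "b * (1 - a / b) = b - a" and "b * (b / a - 1) = b * (b - a) / a"
    using a b by (simp_all add: field_simps)
  ultimately show "b - a \<le> b * ln (b / a)" and "b * ln (b / a) \<le> b * (b - a) / a"
    by simp_all
qed

context
  fixes f g :: "'a::euclidean_space \<Rightarrow> real"
  assumes f_pos: "\<And>y. 0 < f y" and g_pos: "\<And>y. 0 < g y"
    and int_f: "integrable lborel f" and int_g: "integrable lborel g"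
    and same_mass: "(\<integral>y. f y \<partial>lborel) = (\<integral>y. g y \<partial>lborel)"
    and int_rel_ent: "integrable lborel (\<lambda>y. f y * ln (f y / g y))"
begin

lemma rel_ent_nonneg: "0 \<le> rel_ent f g"
proof -
  have "(\<integral>y. f y - g y \<partial>lborel) \<le> rel_ent f g"
    unfolding rel_ent_def using int_f int_g mult_ln_div_ge[OF g_pos f_pos]
    by (intro integral_mono[OF _ int_rel_ent]) auto
  then show ?thesis
    using int_f int_g same_mass by simp
qed

lemma rel_ent_le_chi_square:
  assumes int_chi: "integrable lborel (\<lambda>y. (f y - g y)\<^sup>2 / g y)"
  shows "rel_ent f g \<le> (\<integral>y. (f y - g y)\<^sup>2 / g y \<partial>lborel)"
proof -
  have "f y * ln (f y / g y) \<le> (f y - g y)\<^sup>2 / g y + (f y - g y)" for y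
  proof -
    have "f y * ln (f y / g y) \<le> f y * (f y - g y) / g y"
      by (rule mult_ln_div_le[OF g_pos f_pos])
    also have "\<dots> = (f y - g y)\<^sup>2 / g y + (f y - g y)"
      using g_pos[of y] by (simp add: field_simps power2_eq_square)
    finally show ?thesis .
  qed
  then have "rel_ent f g \<le> (\<integral>y. (f y - g y)\<^sup>2 / g y + (f y - g y) \<partial>lborel)"
    unfolding rel_ent_def using int_chi int_f int_g by (intro integral_mono[OF int_rel_ent]) auto
  then show ?thesis
    using int_chi int_f int_g same_mass by simp
qed

end

context
  fixes R s t :: real and P :: "'a::euclidean_space measure" and x0 :: 'a
  assumes P: "input_dist R P" and s: "0 < s" and x0: "norm x0 \<le> R" and t: "0 \<le> t" "t \<le> 1"
begin

lemma
  shows integrable_out_dens_point_mixture_mult_ln: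
      "integrable lborel (\<lambda>y. out_dens s (point_mixture t x0 P) y * ln (out_dens s P y))"
    and integral_out_dens_point_mixture_mult_ln:
      "(\<integral>y. out_dens s (point_mixture t x0 P) y * ln (out_dens s P y) \<partial>lborel)
        = - (t * out_cross_entropy s P x0 + (1 - t) * out_entropy s P)"
proof -
  note Pt = input_dist_point_mixture[OF P x0 t]
  note ln_f = ln_out_dens_measurable[OF P] abs_ln_out_dens_le[OF P s]
  show "integrable lborel (\<lambda>y. out_dens s (point_mixture t x0 P) y * ln (out_dens s P y))"
    using s by (intro integrable_out_dens_mult[OF Pt s ln_f]) simp
  have "(\<integral>y. out_dens s (point_mixture t x0 P) y * ln (out_dens s P y) \<partial>lborel)
      = (\<integral>x. gauss_smooth s (\<lambda>y. ln (out_dens s P y)) x \<partial>point_mixture t x0 P)"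
    using s by (intro integral_input_gauss_smooth[OF Pt s ln_f, symmetric]) simp
  also have "\<dots> = (\<integral>x. - out_cross_entropy s P x \<partial>point_mixture t x0 P)"
    by (simp add: out_cross_entropy_def)
  also have "\<dots> = t * - out_cross_entropy s P x0 + (1 - t) * (\<integral>x. - out_cross_entropy s P x \<partial>P)"
    using integrable_out_cross_entropy[OF P s] out_cross_entropy_measurable[OF P]
    by (intro integral_point_mixture[OF t input_distD(1,2)[OF P]]) auto
  finally show "(\<integral>y. out_dens s (point_mixture t x0 P) y * ln (out_dens s P y) \<partial>lborel)
      = - (t * out_cross_entropy s P x0 + (1 - t) * out_entropy s P)"
    by (simp add: integral_out_cross_entropy[OF P s])
qed

lemma
  shows integrable_rel_ent_point_mixture:
      "integrable lborel (\<lambda>y. out_dens s (point_mixture t x0 P) y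
         * ln (out_dens s (point_mixture t x0 P) y / out_dens s P y))"
    and out_entropy_point_mixture:
      "out_entropy s (point_mixture t x0 P) = t * out_cross_entropy s P x0 + (1 - t) * out_entropy s P
         - rel_ent (out_dens s (point_mixture t x0 P)) (out_dens s P)"
proof -
  define ft f where "ft = out_dens s (point_mixture t x0 P)" and "f = out_dens s P"
  note Pt = input_dist_point_mixture[OF P x0 t]
  have int_ft: "integrable lborel (\<lambda>y. ft y * ln (ft y))"
    unfolding ft_def using s
    by (intro integrable_out_dens_mult[OF Pt s ln_out_dens_measurable[OF Pt] abs_ln_out_dens_le[OF Pt s]]) simp
  have int_f: "integrable lborel (\<lambda>y. ft y * ln (f y))"
    unfolding ft_def f_def by (rule integrable_out_dens_point_mixture_mult_ln)
  have "ft y * ln (ft y / f y) = ft y * ln (ft y) - ft y * ln (f y)" for y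
    using out_dens_pos[OF Pt s, of y] out_dens_pos[OF P s, of y]
    by (simp add: ft_def f_def ln_div right_diff_distrib)
  then have eq: "(\<lambda>y. ft y * ln (ft y / f y)) = (\<lambda>y. ft y * ln (ft y) - ft y * ln (f y))"
    by auto
  show "integrable lborel (\<lambda>y. out_dens s (point_mixture t x0 P) y
         * ln (out_dens s (point_mixture t x0 P) y / out_dens s P y))"
    using int_ft int_f by (simp add: eq flip: ft_def f_def)
  show "out_entropy s (point_mixture t x0 P) = t * out_cross_entropy s P x0 + (1 - t) * out_entropy s P
         - rel_ent (out_dens s (point_mixture t x0 P)) (out_dens s P)"
    using int_ft int_f integral_out_dens_point_mixture_mult_ln
    by (simp add: rel_ent_def out_entropy_def eq flip: ft_def f_def)
qed

lemma rel_ent_point_mixture_bounds: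
  shows "0 \<le> rel_ent (out_dens s (point_mixture t x0 P)) (out_dens s P)"
    and "rel_ent (out_dens s (point_mixture t x0 P)) (out_dens s P)
      \<le> t\<^sup>2 * (\<integral>y. (gauss_dens s x0 y - out_dens s P y)\<^sup>2 / out_dens s P y \<partial>lborel)"
proof -
  note Pt = input_dist_point_mixture[OF P x0 t]
  note densities = out_dens_pos[OF Pt s] out_dens_pos[OF P s] integrable_out_dens[OF Pt s]
    integrable_out_dens[OF P s] trans[OF integral_out_dens[OF Pt s] integral_out_dens[OF P s, symmetric]]
    integrable_rel_ent_point_mixture
  show "0 \<le> rel_ent (out_dens s (point_mixture t x0 P)) (out_dens s P)"
    by (rule rel_ent_nonneg[OF densities])
  have "out_dens s (point_mixture t x0 P) y - out_dens s P y = t * (gauss_dens s x0 y - out_dens s P y)" for y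
    by (simp add: out_dens_point_mixture[OF P s t] algebra_simps)
  then have diff: "(out_dens s (point_mixture t x0 P) y - out_dens s P y)\<^sup>2 / out_dens s P y
      = t\<^sup>2 * ((gauss_dens s x0 y - out_dens s P y)\<^sup>2 / out_dens s P y)" for y
    by (simp add: power_mult_distrib)
  have "integrable lborel (\<lambda>y. (out_dens s (point_mixture t x0 P) y - out_dens s P y)\<^sup>2 / out_dens s P y)"
    unfolding diff by (intro integrable_mult_right integrable_chi_square[OF P s x0])
  then have "rel_ent (out_dens s (point_mixture t x0 P)) (out_dens s P)
      \<le> (\<integral>y. (out_dens s (point_mixture t x0 P) y - out_dens s P y)\<^sup>2 / out_dens s P y \<partial>lborel)"
    by (rule rel_ent_le_chi_square[OF densities])
  then show "rel_ent (out_dens s (point_mixture t x0 P)) (out_dens s P)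
      \<le> t\<^sup>2 * (\<integral>y. (gauss_dens s x0 y - out_dens s P y)\<^sup>2 / out_dens s P y \<partial>lborel)"
    unfolding diff integral_mult_right_zero .
qed

end

lemma secrecy_rate_point_mixture_ge:
  fixes P :: "'a::euclidean_space measure"
  assumes P: "input_dist R P" and s1: "0 < s1" and s12: "s1 < s2" and x0: "norm x0 \<le> R"
    and t: "0 \<le> t" "t \<le> 1"
  shows "(1 - t) * (mutual_info s1 P - mutual_info s2 P) + t * Xi s1 s2 P x0
      - t\<^sup>2 * (\<integral>y. (gauss_dens s1 x0 y - out_dens s1 P y)\<^sup>2 / out_dens s1 P y \<partial>lborel)
    \<le> mutual_info s1 (point_mixture t x0 P) - mutual_info s2 (point_mixture t x0 P)"
proof -
  have s2: "0 < s2" using s1 s12 by simp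
  note Pt = input_dist_point_mixture[OF P x0 t]
  have key: "(1 - t) * (h1 - c1 - (h2 - c2)) + t * (e1 - e2 + (c2 - c1)) - t\<^sup>2 * q
      \<le> (t * e1 + (1 - t) * h1 - D1 - c1) - (t * e2 + (1 - t) * h2 - D2 - c2)"
    if "D1 \<le> t\<^sup>2 * q" "0 \<le> D2" for h1 h2 c1 c2 e1 e2 D1 D2 q :: real
    using that by (simp add: algebra_simps)
  show ?thesis
    unfolding mutual_info_eq_out_entropy[OF Pt s1] mutual_info_eq_out_entropy[OF Pt s2]
      mutual_info_eq_out_entropy[OF P s1] mutual_info_eq_out_entropy[OF P s2]
      out_entropy_point_mixture[OF P s1 x0 t] out_entropy_point_mixture[OF P s2 x0 t]
      Xi_eq_out_cross_entropy[OF P s1 s2] gauss_entropy_diff[OF s1 s2, symmetric]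
    by (rule key[OF rel_ent_point_mixture_bounds(2)[OF P s1 x0 t] rel_ent_point_mixture_bounds(1)[OF P s2 x0 t]])
qed

section \<open>Support of the input distribution\<close>

lemma AE_in_supp:
  fixes P :: "'a::{metric_space, second_countable_topology} measure"
  assumes sets_P: "sets P = sets borel"
  shows "AE x in P. x \<in> supp P"
proof -
  define F where "F = {ball x e | x e. 0 < e \<and> emeasure P (ball x e) = 0}"
  obtain F' where F': "F' \<subseteq> F" "countable F'" "\<Union>F' = \<Union>F"
    using Lindelof[of F] by (auto simp: F_def)
  have "\<Union>F' \<in> null_sets P"
    using F'(1,2) sets_P by (intro null_sets_UN'[of F' id, simplified]) (auto simp: F_def null_sets_def)
  moreover have "{x \<in> space P. x \<notin> supp P} \<subseteq> \<Union>F'"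
    unfolding F'(3) by (force simp: supp_def F_def not_less)
  ultimately show ?thesis
    by (rule AE_I')
qed

lemma AE_eq_imp_eq_on_supp:
  fixes f :: "'a::metric_space \<Rightarrow> 'b::t1_space"
  assumes sets_P: "sets P = sets borel" and ae: "AE y in P. f y = c"
    and x: "x \<in> supp P" and cont: "continuous (at x) f"
  shows "f x = c"
proof (rule ccontr)
  assume "f x \<noteq> c"
  with cont have "eventually (\<lambda>y. f y \<in> - {c}) (at x)"
    unfolding continuous_at by (intro topological_tendstoD) auto
  then obtain d where d: "0 < d" and ne_at: "\<forall>y. y \<noteq> x \<and> dist y x < d \<longrightarrow> f y \<noteq> c"
    by (auto simp: eventually_at)
  have ne: "f y \<noteq> c" if "y \<in> ball x d" for y
    using that ne_at \<open>f x \<noteq> c\<close> by (cases "y = x") (auto simp: dist_commute)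
  obtain N where N: "{y \<in> space P. f y \<noteq> c} \<subseteq> N" "emeasure P N = 0" "N \<in> sets P"
    using ae by (rule AE_E)
  have "ball x d \<subseteq> N"
  proof
    fix y assume "y \<in> ball x d"
    then have "f y \<noteq> c"
      by (rule ne)
    then show "y \<in> N"
      using N(1) sets_eq_imp_space_eq[OF sets_P] by auto
  qed
  then have "emeasure P (ball x d) = 0"
    using N(2,3) emeasure_mono[of "ball x d" N P] by simp
  moreover have "0 < emeasure P (ball x d)"
    using x d by (simp add: supp_def)
  ultimately show False
    by simp
qed

section \<open>Optimality conditions\<close>

lemma Xi_le_secrecy_cap_if_optimal:
  fixes P :: "'a::euclidean_space measure"
  assumes P: "input_dist R P" and s1: "0 < s1" and s12: "s1 < s2"
    and opt: "mutual_info s1 P - mutual_info s2 P = secrecy_cap s1 s2 R TYPE('a)"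
    and x0: "norm x0 \<le> R"
  shows "Xi s1 s2 P x0 \<le> secrecy_cap s1 s2 R TYPE('a)"
proof -
  define C q where "C = secrecy_cap s1 s2 R TYPE('a)"
    and "q = (\<integral>y. (gauss_dens s1 x0 y - out_dens s1 P y)\<^sup>2 / out_dens s1 P y \<partial>lborel)"
  have s2: "0 < s2" using s1 s12 by simp
  have le: "Xi s1 s2 P x0 - C \<le> t * q" if t: "0 < t" "t < 1" for t
  proof -
    have "(1 - t) * C + t * Xi s1 s2 P x0 - t\<^sup>2 * q
        \<le> mutual_info s1 (point_mixture t x0 P) - mutual_info s2 (point_mixture t x0 P)"
      using secrecy_rate_point_mixture_ge[OF P s1 s12 x0, of t] t opt by (simp add: C_def q_def)
    also have "\<dots> \<le> C"
      unfolding C_def using t by (intro secrecy_rate_le_cap[OF input_dist_point_mixture[OF P x0] s1 s2]) auto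
    finally have "t * (Xi s1 s2 P x0 - C) \<le> t * (t * q)"
      by (simp add: algebra_simps power2_eq_square)
    then show ?thesis
      using t by simp
  qed
  have "((\<lambda>t. t * q) \<longlongrightarrow> 0 * q) (at_right 0)"
    by (intro tendsto_intros)
  moreover have "eventually (\<lambda>t. Xi s1 s2 P x0 - C \<le> t * q) (at_right 0)"
    unfolding eventually_at_right_field using le by (intro exI[of _ 1]) auto
  ultimately have "Xi s1 s2 P x0 - C \<le> 0 * q"
    by (rule tendsto_lowerbound) simp
  then show ?thesis
    by (simp add: C_def)
qed

lemma Xi_eq_secrecy_cap_on_supp_if_optimal:
  fixes P :: "'a::euclidean_space measure"
  assumes P: "input_dist R P" and s1: "0 < s1" and s12: "s1 < s2"
    and opt: "mutual_info s1 P - mutual_info s2 P = secrecy_cap s1 s2 R TYPE('a)"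
    and x: "x \<in> supp P"
  shows "Xi s1 s2 P x = secrecy_cap s1 s2 R TYPE('a)"
proof -
  interpret prob_space P using input_distD[OF P] by simp
  define C where "C = secrecy_cap s1 s2 R TYPE('a)"
  have s2: "0 < s2" using s1 s12 by simp
  have int: "integrable P (\<lambda>x. C - Xi s1 s2 P x)"
    using integrable_Xi[OF P s1 s2] by simp
  have "AE x in P. 0 \<le> C - Xi s1 s2 P x"
    using input_distD(4)[OF P] by eventually_elim (use Xi_le_secrecy_cap_if_optimal[OF P s1 s12 opt] in \<open>simp add: C_def\<close>)
  moreover have "(\<integral>x. C - Xi s1 s2 P x \<partial>P) = 0"
    using integrable_Xi[OF P s1 s2] by (simp add: integral_Xi[OF P s1 s2] opt C_def prob_space)
  ultimately have "AE x in P. C = Xi s1 s2 P x"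
    using integral_nonneg_eq_0_iff_AE[OF int] by simp
  then have "AE x in P. Xi s1 s2 P x = C"
    by (rule eventually_mono) simp
  then show ?thesis
    unfolding C_def using input_distD(2)[OF P] x continuous_Xi[OF P s1 s2]
    by (intro AE_eq_imp_eq_on_supp)
qed

lemma optimal_if_Xi_eq_secrecy_cap_on_supp:
  fixes P :: "'a::euclidean_space measure"
  assumes P: "input_dist R P" and s1: "0 < s1" and s2: "0 < s2"
    and Xi_eq: "\<forall>x\<in>supp P. Xi s1 s2 P x = secrecy_cap s1 s2 R TYPE('a)"
  shows "mutual_info s1 P - mutual_info s2 P = secrecy_cap s1 s2 R TYPE('a)"
proof -
  interpret prob_space P using input_distD[OF P] by simp
  have "(\<integral>x. Xi s1 s2 P x \<partial>P) = (\<integral>x. secrecy_cap s1 s2 R TYPE('a) \<partial>P)"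
    using AE_in_supp[OF input_distD(2)[OF P]] Xi_eq
      measurable_sets_borel[OF input_distD(2)[OF P] Xi_measurable[OF P s1 s2]]
    by (intro integral_cong_AE) auto
  then show ?thesis
    by (simp add: integral_Xi[OF P s1 s2] prob_space)
qed

theorem lemma1:
  fixes s1 s2 R :: real and P :: "'a::euclidean_space measure"
  assumes "0 < s1" and "s1 < s2" and "0 < R"
    and "input_dist R P"
  shows "(\<forall>x::'a. Xi s1 s2 P x = (\<integral>y. gauss_dens s1 x y * gfun s1 s2 P y \<partial>lborel))
    \<and> (mutual_info s1 P - mutual_info s2 P = secrecy_cap s1 s2 R TYPE('a)
       \<longleftrightarrow> (\<forall>x\<in>supp P. Xi s1 s2 P x = secrecy_cap s1 s2 R TYPE('a))
         \<and> (\<forall>x\<in>cball 0 R. Xi s1 s2 P x \<le> secrecy_cap s1 s2 R TYPE('a)))"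
proof -
  note s1 = \<open>0 < s1\<close> and s12 = \<open>s1 < s2\<close> and P = \<open>input_dist R P\<close>
  have s2: "0 < s2" using s1 s12 by simp
  show ?thesis
    using Xi_eq_integral_gfun[OF P s1 s12] Xi_eq_secrecy_cap_on_supp_if_optimal[OF P s1 s12]
      Xi_le_secrecy_cap_if_optimal[OF P s1 s12] optimal_if_Xi_eq_secrecy_cap_on_supp[OF P s1 s2]
    by auto
qed

end
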